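(* Let $1<p_0<p<\infty$, $p'=p/(p-1)$, and let $f,g$ be nonnegative sequences on $\mathbb{Z}_+$. Assume there is a positive increasing function $\varphi_{p_0}$ on $[1,\infty)$ such that for every $w_0\in\mathcal{A}_{p_0}$, $$\Big(\sum_{k=1}^\infty w_0(k)f(k)^{p_0}\Big)^{1/p_0}\le\varphi_{p_0}\big([w_0]_{\mathcal{A}_{p_0}}\big)\Big(\sum_{k=1}^\infty w_0(k)g(k)^{p_0}\Big)^{1/p_0}.$$ Then for every $w\in\mathcal{A}_p$ with $f\in\ell^p(w)$, $$\Big(\sum_{k=1}^\infty w(k)f(k)^{p}\Big)^{1/p}\le 2^{\frac{p-p_0}{(p-1)p_0}}\,\varphi_{p_0}\Big(\big(2\|\mathcal{M}\|_{\ell^{p'}(w^{1-p'})}\big)^{\frac{p-p_0}{p-1}}[w]_{\mathcal{A}_p}^{\frac{p_0-1}{p-1}}\Big)\Big(\sum_{k=1}^\infty w(k)g(k)^{p}\Big)^{1/p}.$$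
   Context: Throughout, a weight is a sequence $w=\{w(k)\}_{k\ge 1}$ of strictly positive real numbers indexed by $\mathbb{Z}_+=\{1,2,\dots\}$. For $1\le q<\infty$ and a weight $v$, $\ell^q(v)$ is the space of real sequences $f$ with $\|f\|_{\ell^q(v)}=\big(\sum_{k\ge1}v(k)|f(k)|^q\big)^{1/q}<\infty$. The discrete Hardy–Littlewood maximal operator is $\mathcal{M}f(k)=\sup_{n\ge k}\frac1n\sum_{j=1}^n|f(j)|$, $k\in\mathbb{Z}_+$. For $1<q<\infty$, a weight $w$ belongs to $\mathcal{A}_q$ iff $[w]_{\mathcal{A}_q}:=\sup_{n\ge1}\big(\frac1n\sum_{k=1}^n w(k)\big)\big(\frac1n\sum_{k=1}^n w(k)^{-1/(q-1)}\big)^{q-1}<\infty$. $\|\mathcal{M}\|_{\ell^q(v)}$ denotes the operator norm $\sup\{\|\mathcal{M}f\|_{\ell^q(v)}:\|f\|_{\ell^q(v)}\le1\}$; it is known to be finite when $v\in\mathcal{A}_q$ (and $w\in\mathcal{A}_p$ implies $w^{1-p'}\in\mathcal{A}_{p'}$). *)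

theory Defs
  imports "HOL-Analysis.Analysis"
begin

text \<open>Sequences on Z+ are modelled as functions nat => real; index 0 is ignored.
  Norms and sums are taken in ennreal so that divergent sums are +infinity.\<close>

definition enn_rpow :: "ennreal \<Rightarrow> real \<Rightarrow> ennreal" where
  "enn_rpow x r = (if x = top then top else ennreal (enn2real x powr r))"

definition wnorm :: "real \<Rightarrow> (nat \<Rightarrow> real) \<Rightarrow> (nat \<Rightarrow> ennreal) \<Rightarrow> ennreal" where
  "wnorm q v F = enn_rpow (\<Sum>k. ennreal (v (Suc k)) * enn_rpow (F (Suc k)) q) (1 / q)"

definition is_weight :: "(nat \<Rightarrow> real) \<Rightarrow> bool" where
  "is_weight w \<longleftrightarrow> (\<forall>k\<ge>1. w k > 0)"

definition Aq_char :: "real \<Rightarrow> (nat \<Rightarrow> real) \<Rightarrow> ennreal" where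
  "Aq_char q w = (SUP n\<in>{1::nat..}. ennreal
      ((1 / real n * (\<Sum>k=1..n. w k)) *
       (1 / real n * (\<Sum>k=1..n. w k powr (- 1 / (q - 1)))) powr (q - 1)))"

definition in_Aq :: "real \<Rightarrow> (nat \<Rightarrow> real) \<Rightarrow> bool" where
  "in_Aq q w \<longleftrightarrow> is_weight w \<and> Aq_char q w < top"

text \<open>[w]_{A_q} as a real number (meaningful when w is in A_q)\<close>
definition Aq_const :: "real \<Rightarrow> (nat \<Rightarrow> real) \<Rightarrow> real" where
  "Aq_const q w = enn2real (Aq_char q w)"

definition maxop :: "(nat \<Rightarrow> real) \<Rightarrow> nat \<Rightarrow> ennreal" where
  "maxop f k = (SUP n\<in>{max k 1..}. ennreal ((\<Sum>j=1..n. \<bar>f j\<bar>) / real n))"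

definition maxop_norm :: "real \<Rightarrow> (nat \<Rightarrow> real) \<Rightarrow> ennreal" where
  "maxop_norm q v = (SUP f\<in>{f. wnorm q v (\<lambda>k. ennreal \<bar>f k\<bar>) \<le> 1}. wnorm q v (maxop f))"

end

theory Submission
  imports Defs
begin

(* Rubio de Francia extrapolation. Put q = p/(p-1) and sigma = w^(1-q). Since w is in A_p, the
   maximal operator M is bounded on l^q(sigma) (by Lerner's argument: M is dominated by a
   composition of two weighted maximal functions, each controlled by a weighted Doob inequality);
   let K be its norm. For h = f^(p-1) w, the Rubio de Francia series H = sum_i M^i h / (2K)^i
   satisfies h <= H, ||H||_{l^q(sigma)} <= 2 ||h||_{l^q(sigma)} = 2 ||f||_{l^p(w)}^(p-1), and
   M H <= 2K H. The weight w0 = w^((p0-1)/(p-1)) H^((p-p0)/(p-1)) is therefore in A_{p0} with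
   [w0] <= (2K)^((p-p0)/(p-1)) [w]^((p0-1)/(p-1)). From h <= H one gets
   sum w f^p <= sum w0 f^p0, Hoelder with exponent p/p0 bounds sum w0 g^p0 by the l^p(w) norm
   of g and the l^q(sigma) norm of H, and since ||f||_{l^p(w)} is finite the remaining power of
   it can be absorbed. *)

lemma sum_powr_holder:
  fixes a b :: "'a \<Rightarrow> real"
  assumes "finite S" and "0 < \<theta>" "\<theta> < 1"
    and a: "\<And>i. i \<in> S \<Longrightarrow> a i \<ge> 0" and b: "\<And>i. i \<in> S \<Longrightarrow> b i \<ge> 0"
  shows "(\<Sum>i\<in>S. a i powr \<theta> * b i powr (1 - \<theta>)) \<le> (\<Sum>i\<in>S. a i) powr \<theta> * (\<Sum>i\<in>S. b i) powr (1 - \<theta>)"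
proof -
  define A where "A = (\<Sum>i\<in>S. a i)"
  define B where "B = (\<Sum>i\<in>S. b i)"
  have "A \<ge> 0" "B \<ge> 0" using a b by (auto simp: A_def B_def intro: sum_nonneg)
  show ?thesis
  proof (cases "A = 0 \<or> B = 0")
    case True
    then have "\<forall>i\<in>S. a i = 0 \<or> b i = 0"
      using sum_nonneg_eq_0_iff[OF \<open>finite S\<close>] a b unfolding A_def B_def by metis
    then have "(\<Sum>i\<in>S. a i powr \<theta> * b i powr (1 - \<theta>)) = 0"
      by (intro sum.neutral) auto
    then show ?thesis by (simp add: A_def[symmetric] B_def[symmetric])
  next
    case False
    with \<open>A \<ge> 0\<close> \<open>B \<ge> 0\<close> have "A > 0" "B > 0" by auto
    have young: "a i powr \<theta> * b i powr (1 - \<theta>)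
        \<le> A powr \<theta> * B powr (1 - \<theta>) * (\<theta> * (a i / A) + (1 - \<theta>) * (b i / B))"
      if i: "i \<in> S" for i
    proof (cases "a i = 0 \<or> b i = 0")
      case True
      then show ?thesis using a[OF i] b[OF i] \<open>A > 0\<close> \<open>B > 0\<close> assms(2,3)
        by (auto intro!: mult_nonneg_nonneg add_nonneg_nonneg)
    next
      case False
      then have pos: "a i / A > 0" "b i / B > 0" using a[OF i] b[OF i] \<open>A > 0\<close> \<open>B > 0\<close> by auto
      have "(a i / A) powr \<theta> * (b i / B) powr (1 - \<theta>) \<le> \<theta> * (a i / A) + (1 - \<theta>) * (b i / B)"
        using Youngs_inequality_0[of \<theta> "1 - \<theta>", OF _ _ _ pos] assms(2,3) by auto
      moreover have "(a i / A) powr \<theta> * (b i / B) powr (1 - \<theta>)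
          = a i powr \<theta> * b i powr (1 - \<theta>) / (A powr \<theta> * B powr (1 - \<theta>))"
        using a[OF i] b[OF i] \<open>A > 0\<close> \<open>B > 0\<close> by (simp add: powr_divide)
      ultimately show ?thesis using \<open>A > 0\<close> \<open>B > 0\<close> by (simp add: divide_le_eq mult.commute)
    qed
    have "(\<Sum>i\<in>S. a i powr \<theta> * b i powr (1 - \<theta>))
        \<le> (\<Sum>i\<in>S. A powr \<theta> * B powr (1 - \<theta>) * (\<theta> * (a i / A) + (1 - \<theta>) * (b i / B)))"
      using young by (rule sum_mono)
    also have "\<dots> = A powr \<theta> * B powr (1 - \<theta>) * (\<theta> * (\<Sum>i\<in>S. a i) / A + (1 - \<theta>) * (\<Sum>i\<in>S. b i) / B)"
      by (simp add: sum_distrib_left sum.distrib sum_divide_distrib[symmetric] algebra_simps)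
    also have "\<dots> = A powr \<theta> * B powr (1 - \<theta>)"
      using \<open>A > 0\<close> \<open>B > 0\<close> by (simp add: A_def[symmetric] B_def[symmetric])
    finally show ?thesis by (simp add: A_def B_def)
  qed
qed

lemma avg_powr_holder:
  fixes u v :: "nat \<Rightarrow> real"
  assumes "n \<ge> 1" "0 < \<theta>" "\<theta> < 1"
    and u: "\<And>k. k \<in> {1..n} \<Longrightarrow> u k > 0" and v: "\<And>k. k \<in> {1..n} \<Longrightarrow> v k > 0"
  shows "1 / n * (\<Sum>k=1..n. u k powr \<theta> * v k powr (1 - \<theta>))
    \<le> ((\<Sum>k=1..n. u k) / n) powr \<theta> * ((\<Sum>k=1..n. v k) / n) powr (1 - \<theta>)"
proof -
  define U where "U = (\<Sum>k=1..n. u k) / n"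
  define V where "V = (\<Sum>k=1..n. v k) / n"
  have "U > 0" "V > 0" unfolding U_def V_def using assms by (auto intro!: divide_pos_pos sum_pos)
  have "(\<Sum>k=1..n. u k powr \<theta> * v k powr (1 - \<theta>)) \<le> (n * U) powr \<theta> * (n * V) powr (1 - \<theta>)"
    using sum_powr_holder[of "{1..n}" \<theta> u v] assms by (force simp: less_imp_le U_def V_def)
  also have "\<dots> = (n powr \<theta> * n powr (1 - \<theta>)) * (U powr \<theta> * V powr (1 - \<theta>))"
    using \<open>U > 0\<close> \<open>V > 0\<close> by (simp add: powr_mult)
  also have "n powr \<theta> * n powr (1 - \<theta>) = n"
    using assms by (simp add: powr_add[symmetric])
  finally show ?thesis
    using assms by (simp add: U_def V_def divide_le_eq mult.commute)
qed

lemma sum_weighted_holder: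
  fixes \<mu> a b :: "'a \<Rightarrow> real"
  assumes "finite S" and q: "q > 1" and mu: "\<And>j. j \<in> S \<Longrightarrow> \<mu> j > 0"
    and a: "\<And>j. j \<in> S \<Longrightarrow> a j \<ge> 0" and b: "\<And>j. j \<in> S \<Longrightarrow> b j \<ge> 0"
  shows "(\<Sum>j\<in>S. \<mu> j * a j * b j powr (q - 1))
    \<le> (\<Sum>j\<in>S. \<mu> j * a j powr q) powr (1/q) * (\<Sum>j\<in>S. \<mu> j * b j powr q) powr (1 - 1/q)"
proof -
  have "\<mu> k * a k * b k powr (q - 1) = (\<mu> k * a k powr q) powr (1/q) * (\<mu> k * b k powr q) powr (1 - 1/q)"
    if k: "k \<in> S" for k
  proof -
    have "(\<mu> k * a k powr q) powr (1/q) * (\<mu> k * b k powr q) powr (1 - 1/q)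
        = (\<mu> k powr (1/q) * \<mu> k powr (1 - 1/q)) * ((a k powr q) powr (1/q) * (b k powr q) powr (1 - 1/q))"
      using mu[OF k] a[OF k] b[OF k] by (simp add: powr_mult)
    also have "\<mu> k powr (1/q) * \<mu> k powr (1 - 1/q) = \<mu> k"
      using mu[OF k] by (simp add: powr_add[symmetric])
    also have "(a k powr q) powr (1/q) = a k" using a[OF k] q by (simp add: powr_powr)
    also have "(b k powr q) powr (1 - 1/q) = b k powr (q - 1)"
      using q by (simp add: powr_powr right_diff_distrib)
    finally show ?thesis by simp
  qed
  then have "(\<Sum>j\<in>S. \<mu> j * a j * b j powr (q - 1))
      = (\<Sum>j\<in>S. (\<mu> j * a j powr q) powr (1/q) * (\<mu> j * b j powr q) powr (1 - 1/q))"
    by (rule sum.cong[OF refl])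
  also have "\<dots> \<le> (\<Sum>j\<in>S. \<mu> j * a j powr q) powr (1/q) * (\<Sum>j\<in>S. \<mu> j * b j powr q) powr (1 - 1/q)"
    using q by (intro sum_powr_holder \<open>finite S\<close>) (auto intro!: mult_nonneg_nonneg less_imp_le[OF mu] a b)
  finally show ?thesis .
qed

lemma young_dual_exponent:
  fixes x y r :: real
  assumes "x \<ge> 0" "y \<ge> 0" "r > 1"
  shows "r / (r - 1) * y * x powr (r - 1) \<le> x powr r + y powr r / (r - 1)"
proof -
  have "x powr (r - 1) * y \<le> (x powr (r - 1)) powr (r / (r - 1)) / (r / (r - 1)) + y powr r / r"
    using assms by (intro Youngs_inequality) (auto simp: field_simps)
  also have "(x powr (r - 1)) powr (r / (r - 1)) = x powr r"
    using assms by (simp add: powr_powr)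
  finally have "r * (x powr (r - 1) * y) \<le> (r - 1) * x powr r + y powr r"
    using assms by (simp add: field_simps)
  then have "r * (x powr (r - 1) * y) / (r - 1) \<le> ((r - 1) * x powr r + y powr r) / (r - 1)"
    using assms by (intro divide_right_mono) auto
  then show ?thesis
    using assms by (simp add: add_divide_distrib mult_ac)
qed

lemma powr_le_self_absorb:
  fixes T X c r :: real
  assumes "T \<ge> 0" "X \<ge> 0" "c \<ge> 0" "r > 1" "T \<le> c * X powr (1/r) * T powr (1 - 1/r)"
  shows "T \<le> c powr r * X"
proof (cases "T = 0")
  case True then show ?thesis using assms by simp
next
  case False
  then have "T > 0" using assms by simp
  then have "T powr (1/r) * T powr (1 - 1/r) \<le> (c * X powr (1/r)) * T powr (1 - 1/r)"
    using assms by (simp add: powr_add[symmetric])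
  then have "T powr (1/r) \<le> c * X powr (1/r)"
    using \<open>T > 0\<close> by (simp add: mult_le_cancel_right)
  then have "(T powr (1/r)) powr r \<le> (c * X powr (1/r)) powr r"
    using assms by (intro powr_mono2) auto
  then show ?thesis using assms \<open>T > 0\<close> by (simp add: powr_powr powr_mult)
qed

lemma power_powr:
  fixes a :: real
  shows "a \<ge> 0 \<Longrightarrow> (a ^ i) powr r = (a powr r) ^ i"
  by (induction i) (auto simp: powr_mult)

section \<open>Truncated weighted maximal functions\<close>

definition wavg :: "(nat \<Rightarrow> real) \<Rightarrow> (nat \<Rightarrow> real) \<Rightarrow> nat \<Rightarrow> real" where
  "wavg \<mu> x n = (\<Sum>j=1..n. \<mu> j * x j) / (\<Sum>j=1..n. \<mu> j)"

(* wmax is the weighted forward maximal function truncated at N, so that all maxima are finite. *)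
definition wmax :: "(nat \<Rightarrow> real) \<Rightarrow> (nat \<Rightarrow> real) \<Rightarrow> nat \<Rightarrow> nat \<Rightarrow> real" where
  "wmax \<mu> x N k = Max (wavg \<mu> x ` {k..N})"

lemma wavg_nonneg:
  "(\<And>j. j \<in> {1..n} \<Longrightarrow> \<mu> j > 0) \<Longrightarrow> (\<And>j. j \<in> {1..n} \<Longrightarrow> x j \<ge> 0) \<Longrightarrow> wavg \<mu> x n \<ge> 0"
  unfolding wavg_def by (intro divide_nonneg_nonneg sum_nonneg) (auto intro: less_imp_le mult_nonneg_nonneg)

lemma wavg_le_wmax: "k \<le> n \<Longrightarrow> n \<le> N \<Longrightarrow> wavg \<mu> x n \<le> wmax \<mu> x N k"
  unfolding wmax_def by (intro Max_ge) auto

lemma wmax_attained: "k \<le> N \<Longrightarrow> \<exists>n\<in>{k..N}. wmax \<mu> x N k = wavg \<mu> x n"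
  unfolding wmax_def using Max_in[of "wavg \<mu> x ` {k..N}"] by fastforce

lemma wmax_nonneg:
  assumes "1 \<le> k" "k \<le> N" "\<And>j. j \<in> {1..N} \<Longrightarrow> \<mu> j > 0" "\<And>j. j \<in> {1..N} \<Longrightarrow> x j \<ge> 0"
  shows "wmax \<mu> x N k \<ge> 0"
  using wavg_le_wmax[of k k N \<mu> x] wavg_nonneg[of k \<mu> x] assms by fastforce

lemma wmax_eq_max: "k < N \<Longrightarrow> wmax \<mu> x N k = max (wavg \<mu> x k) (wmax \<mu> x N (Suc k))"
proof -
  assume "k < N"
  then have "{k..N} = insert k {Suc k..N}" by auto
  then show ?thesis unfolding wmax_def using \<open>k < N\<close> by simp
qed

lemma wmax_last: "wmax \<mu> x N N = wavg \<mu> x N"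
  unfolding wmax_def by simp

lemma doob_step:
  fixes A F r :: real
  assumes "A \<ge> 0" "F \<ge> 0" "r > 1"
  shows "max A F powr r - r / (r - 1) * A * max A F powr (r - 1) \<le> F powr r - r / (r - 1) * A * F powr (r - 1)"
proof (cases "F \<ge> A")
  case True then show ?thesis by simp
next
  case False
  have "A * A powr (r - 1) = A powr r"
    using powr_mult_base[OF \<open>A \<ge> 0\<close>, of "r - 1"] by simp
  then have "A powr r - r / (r - 1) * A * A powr (r - 1) = (1 - r / (r - 1)) * A powr r"
    by (simp add: algebra_simps)
  also have "\<dots> = - (A powr r) / (r - 1)"
    using \<open>r > 1\<close> by (simp add: field_simps)
  also have "\<dots> \<le> F powr r - r / (r - 1) * A * F powr (r - 1)"
    using young_dual_exponent[OF \<open>F \<ge> 0\<close> \<open>A \<ge> 0\<close> \<open>r > 1\<close>] by simp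
  finally show ?thesis using False by simp
qed

lemma wmax_telescope:
  fixes \<mu> x :: "nat \<Rightarrow> real" and r :: real
  assumes r: "r > 1" and mu: "\<And>j. j \<in> {1..N} \<Longrightarrow> \<mu> j > 0" and x: "\<And>j. j \<in> {1..N} \<Longrightarrow> x j \<ge> 0"
    and "1 \<le> m" "m \<le> N"
  shows "(\<Sum>k=1..m. \<mu> k * wmax \<mu> x N k powr r - r/(r-1) * (\<mu> k * x k * wmax \<mu> x N k powr (r-1)))
      \<le> (\<Sum>j=1..m. \<mu> j) * wmax \<mu> x N m powr r
         - r/(r-1) * (\<Sum>j=1..m. \<mu> j * x j) * wmax \<mu> x N m powr (r-1)"
  using assms(4,5)
proof (induction m rule: nat_induct_at_least)
  case base
  then show ?case by (simp add: algebra_simps)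
next
  case (Suc m)
  define F where "F = wmax \<mu> x N"
  define W where "W = (\<Sum>j=1..m. \<mu> j)"
  define S where "S = (\<Sum>j=1..m. \<mu> j * x j)"
  have "W > 0" unfolding W_def using mu Suc by (intro sum_pos) auto
  have "S \<ge> 0" unfolding S_def using Suc by (intro sum_nonneg mult_nonneg_nonneg) (auto intro!: less_imp_le[OF mu] x)
  have "F (Suc m) \<ge> 0" unfolding F_def using Suc mu x by (intro wmax_nonneg) auto
  have "m < N" using Suc by simp
  then have Fm: "F m = max (S / W) (F (Suc m))"
    using wmax_eq_max[of m N \<mu> x] unfolding F_def wavg_def S_def W_def by simp
  have scale: "W * (a - r/(r-1) * (S / W) * b) = W * a - r/(r-1) * S * b" for a b
    using \<open>W > 0\<close> r by (simp add: field_simps)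
  have "W * F m powr r - r/(r-1) * S * F m powr (r-1)
      \<le> W * F (Suc m) powr r - r/(r-1) * S * F (Suc m) powr (r-1)"
    using mult_left_mono[OF doob_step[of "S / W" "F (Suc m)" r], of W]
      \<open>W > 0\<close> \<open>S \<ge> 0\<close> \<open>F (Suc m) \<ge> 0\<close> r
    unfolding Fm scale by simp
  moreover have "(\<Sum>k=1..m. \<mu> k * F k powr r - r/(r-1) * (\<mu> k * x k * F k powr (r-1)))
      \<le> W * F m powr r - r/(r-1) * S * F m powr (r-1)"
    using Suc unfolding F_def W_def S_def by simp
  ultimately show ?case
    using Suc by (simp add: F_def[symmetric] W_def S_def algebra_simps)
qed

lemma sum_wmax_powr_le:
  fixes \<mu> x :: "nat \<Rightarrow> real" and r :: real
  assumes r: "r > 1" and mu: "\<And>j. j \<in> {1..N} \<Longrightarrow> \<mu> j > 0" and x: "\<And>j. j \<in> {1..N} \<Longrightarrow> x j \<ge> 0"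
  shows "(\<Sum>k=1..N. \<mu> k * wmax \<mu> x N k powr r) \<le> (r/(r-1)) powr r * (\<Sum>k=1..N. \<mu> k * x k powr r)"
proof (cases "N = 0")
  case True then show ?thesis by simp
next
  case False
  define F where "F = wmax \<mu> x N"
  have F0: "\<And>k. k \<in> {1..N} \<Longrightarrow> F k \<ge> 0" unfolding F_def using mu x by (intro wmax_nonneg) auto
  define W where "W = (\<Sum>j=1..N. \<mu> j)"
  define S where "S = (\<Sum>j=1..N. \<mu> j * x j)"
  have "W > 0" unfolding W_def using mu False by (intro sum_pos) auto
  have "S \<ge> 0" unfolding S_def by (intro sum_nonneg mult_nonneg_nonneg) (auto intro!: less_imp_le[OF mu] x)
  have "W * F N = S"
    using \<open>W > 0\<close> unfolding F_def wmax_last wavg_def S_def W_def by simp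
  have "F N \<ge> 0" using F0 False by simp
  have "W * F N powr r = W * (F N * F N powr (r - 1))"
    using powr_mult_base[OF \<open>F N \<ge> 0\<close>, of "r - 1"] by simp
  also have "\<dots> = S * F N powr (r - 1)"
    using \<open>W * F N = S\<close> by (simp add: mult.assoc[symmetric])
  finally have "W * F N powr r = S * F N powr (r - 1)" .
  then have "W * F N powr r - r/(r-1) * S * F N powr (r-1) = (1 - r/(r-1)) * (S * F N powr (r - 1))"
    by (simp add: algebra_simps)
  also have "\<dots> \<le> 0"
    using r \<open>S \<ge> 0\<close> by (intro mult_nonpos_nonneg) auto
  moreover have "(\<Sum>k=1..N. \<mu> k * F k powr r - r/(r-1) * (\<mu> k * x k * F k powr (r-1)))
      \<le> W * F N powr r - r/(r-1) * S * F N powr (r-1)"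
    unfolding F_def W_def S_def using False by (intro wmax_telescope[OF r mu x]) auto
  ultimately have "(\<Sum>k=1..N. \<mu> k * F k powr r - r/(r-1) * (\<mu> k * x k * F k powr (r-1))) \<le> 0"
    by linarith
  then have "(\<Sum>k=1..N. \<mu> k * F k powr r) \<le> r/(r-1) * (\<Sum>k=1..N. \<mu> k * x k * F k powr (r-1))"
    by (simp add: sum_subtractf sum_distrib_left)
  also have "\<dots> \<le> r/(r-1) * ((\<Sum>k=1..N. \<mu> k * x k powr r) powr (1/r) * (\<Sum>k=1..N. \<mu> k * F k powr r) powr (1 - 1/r))"
    using r by (intro mult_left_mono sum_weighted_holder) (auto intro: mu x F0)
  finally show ?thesis unfolding F_def
    by (intro powr_le_self_absorb)
      (use r in \<open>auto intro!: sum_nonneg mult_nonneg_nonneg less_imp_le[OF mu] x F0[unfolded F_def]\<close>)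
qed

(* Lerner's pointwise bound: an unweighted average is controlled by the composition of the
   u-weighted and the sigma-weighted maximal functions, the constant being the A_q-type bound A. *)
lemma avg_powr_le_wmax_dual:
  fixes \<sigma> u f :: "nat \<Rightarrow> real" and q A :: real
  assumes q: "q > 1" and sp: "\<And>j. j \<in> {1..N} \<Longrightarrow> \<sigma> j > 0" and up: "\<And>j. j \<in> {1..N} \<Longrightarrow> u j > 0"
    and f: "\<And>j. j \<in> {1..N} \<Longrightarrow> f j \<ge> 0"
    and Acond: "\<And>n. n \<in> {1..N} \<Longrightarrow> ((\<Sum>j=1..n. \<sigma> j) / n) * ((\<Sum>j=1..n. u j) / n) powr (q - 1) \<le> A"
    and kn: "1 \<le> k" "k \<le> n" "n \<le> N"
  shows "wavg (\<lambda>_. 1) f n powr (q - 1) \<le> A * wmax \<sigma> (\<lambda>j. wmax u (\<lambda>i. f i / u i) N j powr (q - 1) / \<sigma> j) N k"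
proof -
  define g where "g = (\<lambda>i. f i / u i)"
  define G where "G = (\<lambda>j. wmax u g N j powr (q - 1) / \<sigma> j)"
  define S where "S = (\<Sum>j=1..n. \<sigma> j)"
  define U where "U = (\<Sum>j=1..n. u j)"
  define a where "a = wavg u g n"
  have n1: "n \<ge> 1" using kn by simp
  have Sp: "S > 0" unfolding S_def using sp kn by (intro sum_pos) auto
  have Up: "U > 0" unfolding U_def using up kn by (intro sum_pos) auto
  have g0: "\<And>j. j \<in> {1..N} \<Longrightarrow> g j \<ge> 0" unfolding g_def using f up by (simp add: less_imp_le)
  have a0: "a \<ge> 0" unfolding a_def by (rule wavg_nonneg) (use up g0 kn in auto)
  have sumf: "(\<Sum>j=1..n. f j) = U * a"
  proof -
    have "(\<Sum>j=1..n. u j * g j) = (\<Sum>j=1..n. f j)"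
    proof (intro sum.cong refl)
      fix j assume "j \<in> {1..n}"
      then have "u j > 0" using up kn by auto
      then show "u j * g j = f j" by (simp add: g_def)
    qed
    then show ?thesis unfolding a_def wavg_def U_def using Up U_def by simp
  qed
  have avg: "wavg (\<lambda>_. 1) f n = (U / n) * a"
    unfolding wavg_def using sumf by simp
  have avg_G: "wavg \<sigma> G n \<ge> n * a powr (q - 1) / S"
  proof -
    have "(\<Sum>j=1..n. \<sigma> j * G j) = (\<Sum>j=1..n. wmax u g N j powr (q - 1))"
    proof (intro sum.cong refl)
      fix j assume "j \<in> {1..n}"
      then have "\<sigma> j > 0" using sp kn by auto
      then show "\<sigma> j * G j = wmax u g N j powr (q - 1)" by (simp add: G_def)
    qed
    also have "\<dots> \<ge> (\<Sum>j=1..n. a powr (q - 1))"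
    proof (rule sum_mono)
      fix j assume j: "j \<in> {1..n}"
      have "a \<le> wmax u g N j" unfolding a_def using j kn by (intro wavg_le_wmax) auto
      then show "a powr (q - 1) \<le> wmax u g N j powr (q - 1)" using a0 q by (intro powr_mono2) auto
    qed
    finally have "(\<Sum>j=1..n. \<sigma> j * G j) \<ge> n * a powr (q - 1)" by simp
    then show ?thesis unfolding wavg_def S_def[symmetric] using Sp by (simp add: divide_right_mono)
  qed
  have "wavg \<sigma> G n \<le> wmax \<sigma> G N k" using kn by (intro wavg_le_wmax) auto
  then have max_G: "wmax \<sigma> G N k \<ge> n * a powr (q - 1) / S" using avg_G by simp
  have Ac: "(S / n) * (U / n) powr (q - 1) \<le> A" unfolding S_def U_def using Acond kn by auto
  have "wavg (\<lambda>_. 1) f n powr (q - 1) = (U / n) powr (q - 1) * a powr (q - 1)"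
    unfolding avg using Up a0 by (subst powr_mult) auto
  also have "\<dots> = ((S / n) * (U / n) powr (q - 1)) * (n * a powr (q - 1) / S)"
    using Sp n1 by (simp add: field_simps)
  also have "\<dots> \<le> A * (n * a powr (q - 1) / S)"
    using Ac Sp by (intro mult_right_mono) auto
  also have "\<dots> \<le> A * wmax \<sigma> G N k"
  proof -
    have "0 \<le> (S / n) * (U / n) powr (q - 1)" using Sp by simp
    then have "A \<ge> 0" using Ac by linarith
    then show ?thesis using max_G by (intro mult_left_mono) auto
  qed
  finally show ?thesis unfolding G_def g_def .
qed

lemma wmax_powr_le_wmax_dual:
  fixes \<sigma> u f :: "nat \<Rightarrow> real" and q A :: real
  assumes q: "q > 1" and sp: "\<And>j. j \<in> {1..N} \<Longrightarrow> \<sigma> j > 0" and up: "\<And>j. j \<in> {1..N} \<Longrightarrow> u j > 0"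
    and f: "\<And>j. j \<in> {1..N} \<Longrightarrow> f j \<ge> 0"
    and Acond: "\<And>n. n \<in> {1..N} \<Longrightarrow> ((\<Sum>j=1..n. \<sigma> j) / n) * ((\<Sum>j=1..n. u j) / n) powr (q - 1) \<le> A"
    and k: "1 \<le> k" "k \<le> N"
  shows "wmax (\<lambda>_. 1) f N k powr q
    \<le> A powr (q/(q-1)) * wmax \<sigma> (\<lambda>j. wmax u (\<lambda>i. f i / u i) N j powr (q - 1) / \<sigma> j) N k powr (q/(q-1))"
proof -
  define M where "M = wmax \<sigma> (\<lambda>j. wmax u (\<lambda>i. f i / u i) N j powr (q - 1) / \<sigma> j) N k"
  obtain n where n: "n \<in> {k..N}" "wmax (\<lambda>_. 1) f N k = wavg (\<lambda>_. 1) f n"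
    using wmax_attained[of k N "\<lambda>_. 1" f] k by auto
  have "A \<ge> 0"
    using Acond[of 1] sp[of 1] up[of 1] k by (auto intro: order_trans[rotated])
  have "M \<ge> 0" unfolding M_def using sp k by (intro wmax_nonneg) (auto intro: divide_nonneg_pos)
  have "wavg (\<lambda>_. 1) f n powr (q - 1) \<le> A * M"
    unfolding M_def by (rule avg_powr_le_wmax_dual[OF q sp up f Acond]) (use n k in auto)
  then have "(wavg (\<lambda>_. 1) f n powr (q - 1)) powr (q/(q-1)) \<le> (A * M) powr (q/(q-1))"
    using q by (intro powr_mono2) auto
  then show ?thesis
    using q n \<open>A \<ge> 0\<close> \<open>M \<ge> 0\<close> by (simp add: powr_powr powr_mult M_def)
qed

lemma dual_weight_powr_eq:
  fixes u x y q :: real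
  assumes "q > 1" "u > 0" "x \<ge> 0" "y \<ge> 0"
  shows "u powr (1 - q) * (y powr (q - 1) / u powr (1 - q)) powr (q/(q-1)) = u * y powr q"
    and "u * (x / u) powr q = u powr (1 - q) * x powr q"
proof -
  have "(q - 1) * (q/(q-1)) = q" "(1 - q) * (q/(q-1)) = - q"
    using assms(1) by (simp_all add: field_simps)
  then have "(y powr (q - 1) / u powr (1 - q)) powr (q/(q-1)) = y powr q / u powr (- q)"
    using assms by (simp add: powr_divide powr_powr)
  moreover have "u powr (1 - q) * (y powr q / u powr (- q)) = (u powr (1 - q) * u powr q) * y powr q"
    by (simp add: powr_minus field_simps)
  moreover have "u powr (1 - q) * u powr q = u"
    using assms(2) by (simp add: powr_add[symmetric])
  ultimately show "u powr (1 - q) * (y powr (q - 1) / u powr (1 - q)) powr (q/(q-1)) = u * y powr q"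
    by simp
  show "u * (x / u) powr q = u powr (1 - q) * x powr q"
    using assms by (simp add: powr_divide powr_diff field_simps)
qed

lemma sum_max_avg_powr_le:
  fixes \<sigma> u f :: "nat \<Rightarrow> real" and q A :: real
  assumes q: "q > 1" and sp: "\<And>j. j \<in> {1..N} \<Longrightarrow> \<sigma> j > 0" and up: "\<And>j. j \<in> {1..N} \<Longrightarrow> u j > 0"
    and f: "\<And>j. j \<in> {1..N} \<Longrightarrow> f j \<ge> 0"
    and Acond: "\<And>n. n \<in> {1..N} \<Longrightarrow> ((\<Sum>j=1..n. \<sigma> j) / n) * ((\<Sum>j=1..n. u j) / n) powr (q - 1) \<le> A"
    and rel: "\<And>j. j \<in> {1..N} \<Longrightarrow> \<sigma> j = u j powr (1 - q)"
  shows "(\<Sum>k=1..N. \<sigma> k * wmax (\<lambda>_. 1) f N k powr q)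
     \<le> A powr (q/(q-1)) * q powr (q/(q-1)) * (q/(q-1)) powr q * (\<Sum>k=1..N. \<sigma> k * f k powr q)"
proof -
  define q' where "q' = q/(q-1)"
  have "q' > 1" "q'/(q'-1) = q" using q by (simp_all add: q'_def field_simps)
  define g where "g = (\<lambda>i. f i / u i)"
  define G where "G = (\<lambda>j. wmax u g N j powr (q - 1) / \<sigma> j)"
  have g0: "\<And>j. j \<in> {1..N} \<Longrightarrow> g j \<ge> 0" unfolding g_def using f up by (simp add: less_imp_le)
  have Wu0: "\<And>j. j \<in> {1..N} \<Longrightarrow> wmax u g N j \<ge> 0" using up g0 by (intro wmax_nonneg) auto
  have G0: "\<And>j. j \<in> {1..N} \<Longrightarrow> G j \<ge> 0" unfolding G_def using sp by (simp add: less_imp_le)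
  have A0: "A \<ge> 0" if "N \<ge> 1"
    using Acond[of 1] sp[of 1] up[of 1] that by (auto intro: order_trans[rotated])
  have "(\<Sum>k=1..N. \<sigma> k * wmax (\<lambda>_. 1) f N k powr q) \<le> (\<Sum>k=1..N. A powr q' * (\<sigma> k * wmax \<sigma> G N k powr q'))"
    using wmax_powr_le_wmax_dual[OF q sp up f Acond] sp
    by (intro sum_mono) (auto simp: q'_def G_def g_def mult.left_commute intro: mult_left_mono)
  also have "\<dots> = A powr q' * (\<Sum>k=1..N. \<sigma> k * wmax \<sigma> G N k powr q')"
    by (simp add: sum_distrib_left)
  also have "(\<Sum>k=1..N. \<sigma> k * wmax \<sigma> G N k powr q') \<le> q powr q' * (\<Sum>k=1..N. \<sigma> k * G k powr q')"
    using sum_wmax_powr_le[OF \<open>q' > 1\<close> sp G0] \<open>q'/(q'-1) = q\<close> by simp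
  also have "(\<Sum>k=1..N. \<sigma> k * G k powr q') = (\<Sum>k=1..N. u k * wmax u g N k powr q)"
    using dual_weight_powr_eq(1)[OF q up Wu0 Wu0] rel by (intro sum.cong) (auto simp: G_def q'_def)
  also have "(\<Sum>k=1..N. u k * wmax u g N k powr q) \<le> (q/(q-1)) powr q * (\<Sum>k=1..N. u k * g k powr q)"
    by (rule sum_wmax_powr_le[OF q up g0])
  also have "(\<Sum>k=1..N. u k * g k powr q) = (\<Sum>k=1..N. \<sigma> k * f k powr q)"
    using dual_weight_powr_eq(2)[OF q up f f] rel by (intro sum.cong) (auto simp: g_def)
  finally show ?thesis
    using A0 q by (cases "N = 0") (simp_all add: q'_def mult_left_mono mult.assoc)
qed

definition wsum :: "real \<Rightarrow> (nat \<Rightarrow> real) \<Rightarrow> (nat \<Rightarrow> real) \<Rightarrow> ennreal" where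
  "wsum q v x = (\<Sum>k. ennreal (v (Suc k) * x (Suc k) powr q))"

definition maxop_sum :: "real \<Rightarrow> (nat \<Rightarrow> real) \<Rightarrow> (nat \<Rightarrow> real) \<Rightarrow> ennreal" where
  "maxop_sum q v x = (\<Sum>k. ennreal (v (Suc k)) * enn_rpow (maxop x (Suc k)) q)"

lemma enn_rpow_ennreal: "y \<ge> 0 \<Longrightarrow> enn_rpow (ennreal y) r = ennreal (y powr r)"
  unfolding enn_rpow_def by simp

lemma enn_rpow_top [simp]: "enn_rpow top r = top"
  unfolding enn_rpow_def by simp

lemma enn_rpow_zero [simp]: "enn_rpow 0 r = 0"
  unfolding enn_rpow_def by simp

lemma enn_rpow_one [simp]: "enn_rpow 1 r = 1"
  unfolding enn_rpow_def by simp

lemma enn_rpow_mono: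
  assumes "a \<le> b" "r \<ge> 0"
  shows "enn_rpow a r \<le> enn_rpow b r"
proof (cases "b = top")
  case True then show ?thesis by simp
next
  case False
  with \<open>a \<le> b\<close> have "a \<noteq> top" by (auto simp: top_unique)
  have "enn2real a \<le> enn2real b"
    using assms False by (intro enn2real_mono) (auto simp: top.not_eq_extremum)
  then show ?thesis using False assms \<open>a \<noteq> top\<close> unfolding enn_rpow_def
    by (auto intro!: ennreal_leI powr_mono2)
qed

lemma enn_rpow_inverse_le:
  assumes "enn_rpow S (1/q) \<le> ennreal K" "q > 0" "K \<ge> 0"
  shows "S \<le> ennreal (K powr q)"
proof -
  have "S \<noteq> top" using assms(1) by (auto simp: top_unique)
  then obtain s where s: "S = ennreal s" "0 \<le> s" by (cases S) auto
  then have "s powr (1/q) \<le> K" using assms by (simp add: enn_rpow_ennreal)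
  then have "(s powr (1/q)) powr q \<le> K powr q" using assms by (intro powr_mono2) auto
  then show ?thesis using s assms by (simp add: powr_powr)
qed

lemma enn_rpow_divide:
  assumes "c > 0"
  shows "enn_rpow (a / ennreal c) q = enn_rpow a q / ennreal (c powr q)"
proof (cases a)
  case (real r)
  then show ?thesis
    using assms by (simp add: divide_ennreal enn_rpow_ennreal powr_divide)
qed (use assms in \<open>simp add: ennreal_top_divide\<close>)

lemma enn_rpow_SUP_le:
  fixes a :: "'i \<Rightarrow> real"
  assumes "\<And>i. i \<in> I \<Longrightarrow> a i \<ge> 0" "q > 0"
  shows "enn_rpow (SUP i\<in>I. ennreal (a i)) q \<le> (SUP i\<in>I. ennreal (a i powr q))"
proof (cases "(SUP i\<in>I. ennreal (a i powr q)) = top")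
  case True then show ?thesis unfolding True by simp
next
  case False
  then obtain B where B: "(SUP i\<in>I. ennreal (a i powr q)) = ennreal B" "B \<ge> 0"
    by (cases "(SUP i\<in>I. ennreal (a i powr q))") auto
  have "ennreal (a i) \<le> ennreal (B powr (1/q))" if i: "i \<in> I" for i
  proof -
    have "ennreal (a i powr q) \<le> ennreal B" using B(1) i by (metis SUP_upper)
    then have "(a i powr q) powr (1/q) \<le> B powr (1/q)"
      using B(2) assms(2) by (intro powr_mono2) auto
    then show ?thesis using assms i by (simp add: powr_powr)
  qed
  then have "(SUP i\<in>I. ennreal (a i)) \<le> ennreal (B powr (1/q))" by (rule SUP_least)
  then have "enn_rpow (SUP i\<in>I. ennreal (a i)) q \<le> enn_rpow (ennreal (B powr (1/q))) q"
    using assms by (intro enn_rpow_mono) auto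
  also have "\<dots> = ennreal B" using B(2) assms(2) by (simp add: enn_rpow_ennreal powr_powr)
  finally show ?thesis using B(1) by simp
qed

lemma ennreal_le_suminf: "(f::nat \<Rightarrow> ennreal) i \<le> suminf f"
  using sum_le_suminf[of f "{i}"] by auto

lemma wnorm_eq_wsum:
  "(\<And>k. k \<ge> 1 \<Longrightarrow> v k \<ge> 0) \<Longrightarrow> (\<And>k. k \<ge> 1 \<Longrightarrow> x k \<ge> 0) \<Longrightarrow>
   wnorm q v (\<lambda>k. ennreal (x k)) = enn_rpow (wsum q v x) (1/q)"
  unfolding wnorm_def wsum_def by (auto intro!: arg_cong[where f="\<lambda>S. enn_rpow S (1/q)"] suminf_cong
    simp: enn_rpow_ennreal ennreal_mult)

lemma wnorm_maxop: "wnorm q v (maxop x) = enn_rpow (maxop_sum q v x) (1/q)"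
  unfolding wnorm_def maxop_sum_def ..

lemma sum_le_wsum:
  assumes "wsum q v x \<le> ennreal s" "\<And>k. k \<ge> 1 \<Longrightarrow> v k \<ge> 0" "s \<ge> 0"
  shows "(\<Sum>k=1..N. v k * x k powr q) \<le> s"
proof -
  have "ennreal (\<Sum>k=1..N. v k * x k powr q) = (\<Sum>k<N. ennreal (v (Suc k) * x (Suc k) powr q))"
    using assms(2) by (simp add: sum.atLeast1_atMost_eq)
  also have "\<dots> \<le> wsum q v x" unfolding wsum_def by (rule sum_le_suminf) auto
  also have "\<dots> \<le> ennreal s" by (rule assms(1))
  finally show ?thesis using assms(3) by simp
qed

lemma wsum_le_ennreal:
  assumes "\<And>N. (\<Sum>k=1..N. v k * x k powr q) \<le> B" "\<And>k. k \<ge> 1 \<Longrightarrow> v k \<ge> 0"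
  shows "wsum q v x \<le> ennreal B"
  unfolding wsum_def
proof (rule suminf_le_const)
  fix N
  have "(\<Sum>k<N. ennreal (v (Suc k) * x (Suc k) powr q)) = ennreal (\<Sum>k=1..N. v k * x k powr q)"
    using assms(2) by (simp add: sum.atLeast1_atMost_eq)
  also have "\<dots> \<le> ennreal B" using assms(1) by (rule ennreal_leI)
  finally show "(\<Sum>k<N. ennreal (v (Suc k) * x (Suc k) powr q)) \<le> ennreal B" .
qed simp

lemma term_le_wsum:
  assumes "wsum q v x \<le> ennreal s" "s \<ge> 0" "j \<ge> 1"
  shows "v j * x j powr q \<le> s"
proof -
  obtain i where "j = Suc i" using assms(3) by (cases j) auto
  then have "ennreal (v j * x j powr q) \<le> ennreal s"
    using ennreal_le_suminf[of "\<lambda>k. ennreal (v (Suc k) * x (Suc k) powr q)" i] assms(1)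
    unfolding wsum_def by (blast intro: order_trans)
  then show ?thesis using assms(2) by simp
qed

lemma wsum_le_ennreal_cases:
  assumes "wsum q v x \<le> ennreal b" "b \<ge> 0"
  obtains s where "wsum q v x = ennreal s" "0 \<le> s" "s \<le> b"
proof -
  have "wsum q v x \<noteq> top" using assms by (auto simp: top_unique)
  then obtain s where "wsum q v x = ennreal s" "0 \<le> s" by (cases "wsum q v x") auto
  with assms that show ?thesis by simp
qed

lemma wsum_divide:
  assumes "c > 0" "\<And>k. k \<ge> 1 \<Longrightarrow> v k \<ge> 0" "\<And>k. k \<ge> 1 \<Longrightarrow> x k \<ge> 0"
  shows "wsum q v (\<lambda>k. x k / c) = wsum q v x / ennreal (c powr q)"
  unfolding wsum_def ennreal_suminf_divide[symmetric]
  using assms by (intro suminf_cong) (simp add: powr_divide divide_ennreal)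

lemma le_enn2real_if_ennreal_le:
  assumes "ennreal x \<le> c" "c \<noteq> top"
  shows "x \<le> enn2real c"
proof -
  have "enn2real (ennreal x) \<le> enn2real c"
    using assms by (intro enn2real_mono) (auto simp: top.not_eq_extremum)
  moreover have "x \<le> enn2real (ennreal x)" by (cases "x \<ge> 0") (auto simp: ennreal_neg)
  ultimately show ?thesis by linarith
qed

section \<open>The maximal operator on weighted sequence spaces\<close>

lemma maxop_eq_SUP_wavg: "k \<ge> 1 \<Longrightarrow> maxop x k = (SUP n\<in>{k..}. ennreal (wavg (\<lambda>_. 1) (\<lambda>j. \<bar>x j\<bar>) n))"
  unfolding maxop_def wavg_def by (simp add: max_def)

lemma maxop_zero: "(\<And>j. j \<ge> 1 \<Longrightarrow> x j = 0) \<Longrightarrow> maxop x k = 0"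
  unfolding maxop_def by (simp add: sum.neutral)

lemma maxop_divide:
  assumes "c > 0"
  shows "maxop (\<lambda>j. x j / c) k = maxop x k / ennreal c"
proof -
  have "ennreal ((\<Sum>j=1..n. \<bar>x j / c\<bar>) / real n) = ennreal ((\<Sum>j=1..n. \<bar>x j\<bar>) / real n) / ennreal c" for n
    using assms by (simp add: sum_divide_distrib[symmetric] divide_ennreal sum_nonneg)
  then show ?thesis
    unfolding maxop_def by (simp add: SUP_divide_ennreal)
qed

lemma maxop_finite:
  assumes "maxop_sum q v x \<noteq> top" "v k > 0" "k \<ge> 1"
  shows "maxop x k \<noteq> top"
proof
  assume "maxop x k = top"
  obtain i where i: "k = Suc i" using assms(3) by (cases k) auto
  have "ennreal (v k) * enn_rpow (maxop x k) q \<le> maxop_sum q v x"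
    unfolding maxop_sum_def i by (rule ennreal_le_suminf[where f="\<lambda>k. ennreal (v (Suc k)) * enn_rpow (maxop x (Suc k)) q"])
  with \<open>maxop x k = top\<close> assms show False by (simp add: ennreal_mult_top top_unique)
qed

lemma wmax_mono_right: "k \<le> N \<Longrightarrow> N \<le> N' \<Longrightarrow> wmax \<mu> x N k \<le> wmax \<mu> x N' k"
  using wmax_attained[of k N \<mu> x] wavg_le_wmax[of k _ N' \<mu> x] by force

lemma maxop_powr_le_SUP_wmax:
  assumes "1 \<le> k" "k \<le> K" "q > 0"
  shows "enn_rpow (maxop x k) q \<le> (SUP N. ennreal (wmax (\<lambda>_. 1) (\<lambda>j. \<bar>x j\<bar>) (N + K) k powr q))"
proof -
  have "enn_rpow (maxop x k) q \<le> (SUP n\<in>{k..}. ennreal (wavg (\<lambda>_. 1) (\<lambda>j. \<bar>x j\<bar>) n powr q))"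
    unfolding maxop_eq_SUP_wavg[OF \<open>1 \<le> k\<close>]
    by (rule enn_rpow_SUP_le) (use assms in \<open>auto intro!: wavg_nonneg\<close>)
  also have "\<dots> \<le> (SUP N. ennreal (wmax (\<lambda>_. 1) (\<lambda>j. \<bar>x j\<bar>) (N + K) k powr q))"
  proof (rule SUP_least)
    fix n assume n: "n \<in> {k..}"
    have "wavg (\<lambda>_. 1) (\<lambda>j. \<bar>x j\<bar>) n \<le> wmax (\<lambda>_. 1) (\<lambda>j. \<bar>x j\<bar>) (n + K) k"
      using n by (intro wavg_le_wmax) auto
    then have "ennreal (wavg (\<lambda>_. 1) (\<lambda>j. \<bar>x j\<bar>) n powr q)
        \<le> ennreal (wmax (\<lambda>_. 1) (\<lambda>j. \<bar>x j\<bar>) (n + K) k powr q)"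
      using assms by (intro ennreal_leI powr_mono2) (auto intro!: wavg_nonneg)
    also have "\<dots> \<le> (SUP N. ennreal (wmax (\<lambda>_. 1) (\<lambda>j. \<bar>x j\<bar>) (N + K) k powr q))"
      by (rule SUP_upper) simp
    finally show "ennreal (wavg (\<lambda>_. 1) (\<lambda>j. \<bar>x j\<bar>) n powr q)
        \<le> (SUP N. ennreal (wmax (\<lambda>_. 1) (\<lambda>j. \<bar>x j\<bar>) (N + K) k powr q))" .
  qed
  finally show ?thesis .
qed

lemma maxop_sum_le_Aq:
  fixes \<sigma> u x :: "nat \<Rightarrow> real" and q A X :: real
  assumes q: "q > 1" and sp: "\<And>j. j \<ge> 1 \<Longrightarrow> \<sigma> j > 0" and up: "\<And>j. j \<ge> 1 \<Longrightarrow> u j > 0"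
    and Acond: "\<And>n. n \<ge> 1 \<Longrightarrow> ((\<Sum>j=1..n. \<sigma> j) / n) * ((\<Sum>j=1..n. u j) / n) powr (q - 1) \<le> A"
    and rel: "\<And>j. j \<ge> 1 \<Longrightarrow> \<sigma> j = u j powr (1 - q)"
    and X: "wsum q \<sigma> (\<lambda>k. \<bar>x k\<bar>) \<le> ennreal X" "X \<ge> 0"
  shows "maxop_sum q \<sigma> x \<le> ennreal (A powr (q/(q-1)) * q powr (q/(q-1)) * (q/(q-1)) powr q * X)"
proof -
  define C where "C = A powr (q/(q-1)) * q powr (q/(q-1)) * (q/(q-1)) powr q"
  define M where "M = (\<lambda>N k. \<sigma> k * wmax (\<lambda>_. 1) (\<lambda>j. \<bar>x j\<bar>) N k powr q)"
  have M0: "M N k \<ge> 0" if "k \<ge> 1" for N k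
    using sp[OF that] by (simp add: M_def)
  have trunc: "(\<Sum>k=1..N. M N k) \<le> C * X" for N
  proof -
    have "(\<Sum>k=1..N. M N k) \<le> C * (\<Sum>k=1..N. \<sigma> k * \<bar>x k\<bar> powr q)"
      unfolding C_def M_def by (rule sum_max_avg_powr_le[OF q]) (use sp up Acond rel in auto)
    also have "\<dots> \<le> C * X"
      using sum_le_wsum[OF X(1) _ X(2)] sp by (intro mult_left_mono) (auto simp: C_def less_imp_le)
    finally show ?thesis .
  qed
  have inc: "incseq (\<lambda>N. ennreal (M (N + K) k))" if "1 \<le> k" "k \<le> K" for k K
    using that sp[OF that(1)] q
    by (auto intro!: incseq_SucI ennreal_leI mult_left_mono powr_mono2 wmax_mono_right wmax_nonneg
        simp: M_def)
  have "(\<Sum>k<K. ennreal (\<sigma> (Suc k)) * enn_rpow (maxop x (Suc k)) q) \<le> ennreal (C * X)" for K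
  proof -
    have "(\<Sum>k<K. ennreal (\<sigma> (Suc k)) * enn_rpow (maxop x (Suc k)) q)
        = (\<Sum>k=1..K. ennreal (\<sigma> k) * enn_rpow (maxop x k) q)"
      by (simp add: sum.atLeast1_atMost_eq)
    also have "\<dots> \<le> (\<Sum>k=1..K. ennreal (\<sigma> k) * (SUP N. ennreal (wmax (\<lambda>_. 1) (\<lambda>j. \<bar>x j\<bar>) (N + K) k powr q)))"
      using q by (intro sum_mono mult_left_mono maxop_powr_le_SUP_wmax) auto
    also have "\<dots> = (\<Sum>k=1..K. SUP N. ennreal (M (N + K) k))"
      using sp by (intro sum.cong) (auto simp: M_def SUP_mult_left_ennreal ennreal_mult'' less_imp_le)
    also have "\<dots> = (SUP N. \<Sum>k=1..K. ennreal (M (N + K) k))"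
      by (rule ennreal_SUP_sum[symmetric]) (use inc in auto)
    also have "\<dots> \<le> ennreal (C * X)"
    proof (rule SUP_least)
      fix N
      have "(\<Sum>k=1..K. ennreal (M (N + K) k)) \<le> (\<Sum>k=1..N+K. ennreal (M (N + K) k))"
        by (intro sum_mono2) auto
      also have "\<dots> = ennreal (\<Sum>k=1..N+K. M (N + K) k)"
        using M0 by (intro sum_ennreal) auto
      also have "\<dots> \<le> ennreal (C * X)" using trunc by (intro ennreal_leI)
      finally show "(\<Sum>k=1..K. ennreal (M (N + K) k)) \<le> ennreal (C * X)" .
    qed
    finally show ?thesis .
  qed
  then show ?thesis
    unfolding maxop_sum_def C_def[symmetric] by (rule suminf_le_const[OF summableI])
qed

lemma maxop_norm_le_Aq:
  fixes \<sigma> u :: "nat \<Rightarrow> real" and q A :: real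
  assumes q: "q > 1" and sp: "\<And>j. j \<ge> 1 \<Longrightarrow> \<sigma> j > 0" and up: "\<And>j. j \<ge> 1 \<Longrightarrow> u j > 0"
    and Acond: "\<And>n. n \<ge> 1 \<Longrightarrow> ((\<Sum>j=1..n. \<sigma> j) / n) * ((\<Sum>j=1..n. u j) / n) powr (q - 1) \<le> A"
    and rel: "\<And>j. j \<ge> 1 \<Longrightarrow> \<sigma> j = u j powr (1 - q)"
  shows "maxop_norm q \<sigma> \<le> ennreal ((A powr (q/(q-1)) * q powr (q/(q-1)) * (q/(q-1)) powr q) powr (1/q))"
  unfolding maxop_norm_def
proof (rule SUP_least)
  define C where "C = A powr (q/(q-1)) * q powr (q/(q-1)) * (q/(q-1)) powr q"
  fix f assume "f \<in> {f. wnorm q \<sigma> (\<lambda>k. ennreal \<bar>f k\<bar>) \<le> 1}"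
  then have "enn_rpow (wsum q \<sigma> (\<lambda>k. \<bar>f k\<bar>)) (1/q) \<le> ennreal 1"
    using sp by (simp add: wnorm_eq_wsum less_imp_le)
  then have "wsum q \<sigma> (\<lambda>k. \<bar>f k\<bar>) \<le> ennreal 1"
    using enn_rpow_inverse_le[of _ q 1] q by simp
  then have "maxop_sum q \<sigma> f \<le> ennreal C"
    using maxop_sum_le_Aq[OF q sp up Acond rel, of f 1] by (simp add: C_def)
  then have "wnorm q \<sigma> (maxop f) \<le> enn_rpow (ennreal C) (1/q)"
    unfolding wnorm_maxop using q by (intro enn_rpow_mono) auto
  then show "wnorm q \<sigma> (maxop f) \<le> ennreal (C powr (1/q))"
    by (simp add: C_def enn_rpow_ennreal)
qed

lemma maxop_sum_divide:
  assumes "c > 0" "\<And>k. k \<ge> 1 \<Longrightarrow> v k \<ge> 0"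
  shows "maxop_sum q v (\<lambda>k. x k / c) = maxop_sum q v x / ennreal (c powr q)"
  unfolding maxop_sum_def ennreal_suminf_divide[symmetric]
  using assms by (simp add: maxop_divide enn_rpow_divide ennreal_times_divide)

lemma maxop_sum_le_norm:
  fixes \<sigma> x :: "nat \<Rightarrow> real" and q s :: real
  assumes q: "q > 1" and sp: "\<And>j. j \<ge> 1 \<Longrightarrow> \<sigma> j > 0" and x0: "\<And>j. j \<ge> 1 \<Longrightarrow> x j \<ge> 0"
    and fin: "maxop_norm q \<sigma> \<noteq> top" and Sx: "wsum q \<sigma> x = ennreal s" "s \<ge> 0"
  shows "maxop_sum q \<sigma> x \<le> ennreal (enn2real (maxop_norm q \<sigma>) powr q * s)"
proof (cases "s = 0")
  case True
  have "x j = 0" if j: "j \<ge> 1" for j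
    using term_le_wsum[OF eq_refl[OF Sx(1)] Sx(2) j] True sp[OF j] x0[OF j] by (simp add: mult_le_0_iff)
  then show ?thesis by (simp add: maxop_sum_def maxop_zero)
next
  case False
  with Sx have "s > 0" by simp
  define c where "c = s powr (1/q)"
  have "c > 0" "c powr q = s" using \<open>s > 0\<close> q by (simp_all add: c_def powr_powr)
  define K where "K = enn2real (maxop_norm q \<sigma>)"
  have "wsum q \<sigma> (\<lambda>k. \<bar>x k / c\<bar>) = wsum q \<sigma> (\<lambda>k. x k / c)"
    unfolding wsum_def using x0 \<open>c > 0\<close> by (intro suminf_cong) simp
  also have "\<dots> = 1"
    using \<open>c > 0\<close> \<open>s > 0\<close> sp x0 by (simp add: wsum_divide less_imp_le Sx \<open>c powr q = s\<close> divide_ennreal)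
  finally have "wnorm q \<sigma> (\<lambda>k. ennreal \<bar>x k / c\<bar>) \<le> 1"
    using sp by (simp add: wnorm_eq_wsum less_imp_le)
  then have "wnorm q \<sigma> (maxop (\<lambda>k. x k / c)) \<le> maxop_norm q \<sigma>"
    unfolding maxop_norm_def by (intro SUP_upper) simp
  also have "\<dots> = ennreal K"
    using fin by (simp add: K_def ennreal_enn2real_if)
  finally have "wnorm q \<sigma> (maxop (\<lambda>k. x k / c)) \<le> ennreal K" .
  then have "maxop_sum q \<sigma> x / ennreal s \<le> ennreal (K powr q)"
    using enn_rpow_inverse_le[of _ q K] q \<open>c > 0\<close> sp
    by (simp add: wnorm_maxop maxop_sum_divide less_imp_le K_def \<open>c powr q = s\<close>)
  then have "maxop_sum q \<sigma> x / ennreal s * ennreal s \<le> ennreal (K powr q) * ennreal s"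
    by (rule mult_right_mono) simp
  then show ?thesis
    using \<open>s > 0\<close> by (simp add: ennreal_divide_times ennreal_mult K_def)
qed

section \<open>Rubio de Francia's algorithm\<close>

locale bounded_maxop =
  fixes q :: real and \<sigma> :: "nat \<Rightarrow> real"
  assumes exponent_gt_1: "q > 1"
    and weight_pos: "\<And>j. j \<ge> 1 \<Longrightarrow> \<sigma> j > 0"
    and maxop_norm_finite: "maxop_norm q \<sigma> \<noteq> top"
begin

definition K :: real where
  "K = enn2real (maxop_norm q \<sigma>)"

(* enn2real sends top to 0; by maxop_eq_maxop_real this junk value does not occur on l^q(sigma). *)
definition maxop_real :: "(nat \<Rightarrow> real) \<Rightarrow> nat \<Rightarrow> real" where
  "maxop_real x k = enn2real (maxop x k)"

lemma K_nonneg: "K \<ge> 0"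
  by (simp add: K_def)

lemma maxop_real_nonneg: "maxop_real x k \<ge> 0"
  by (simp add: maxop_real_def)

context
  fixes x :: "nat \<Rightarrow> real" and s :: real
  assumes nonneg: "\<And>j. j \<ge> 1 \<Longrightarrow> x j \<ge> 0"
    and wsum_le: "wsum q \<sigma> x \<le> ennreal s" and "s \<ge> 0"
begin

lemma maxop_sum_le: "maxop_sum q \<sigma> x \<le> ennreal (K powr q * s)"
proof -
  obtain s' where s': "wsum q \<sigma> x = ennreal s'" "0 \<le> s'" "s' \<le> s"
    using wsum_le_ennreal_cases[OF wsum_le \<open>s \<ge> 0\<close>] .
  have "maxop_sum q \<sigma> x \<le> ennreal (K powr q * s')"
    unfolding K_def by (rule maxop_sum_le_norm[OF exponent_gt_1 weight_pos nonneg maxop_norm_finite s'(1,2)])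
  also have "\<dots> \<le> ennreal (K powr q * s)"
    using s' by (intro ennreal_leI mult_left_mono) auto
  finally show ?thesis .
qed

lemma maxop_eq_maxop_real:
  assumes "k \<ge> 1"
  shows "maxop x k = ennreal (maxop_real x k)"
proof -
  have "maxop_sum q \<sigma> x \<noteq> top"
    using maxop_sum_le by (rule neq_top_trans[rotated]) simp
  then have "maxop x k \<noteq> top"
    using weight_pos assms by (intro maxop_finite) auto
  then show ?thesis by (simp add: maxop_real_def ennreal_enn2real_if)
qed

lemma wsum_maxop_real_le: "wsum q \<sigma> (maxop_real x) \<le> ennreal (K powr q * s)"
proof -
  have "wsum q \<sigma> (maxop_real x) = maxop_sum q \<sigma> x"
    unfolding wsum_def maxop_sum_def
    using weight_pos maxop_eq_maxop_real maxop_real_nonneg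
    by (intro suminf_cong) (simp add: enn_rpow_ennreal ennreal_mult less_imp_le)
  then show ?thesis using maxop_sum_le by simp
qed

end

definition maxop_iter :: "(nat \<Rightarrow> real) \<Rightarrow> nat \<Rightarrow> nat \<Rightarrow> real" where
  "maxop_iter h i = (maxop_real ^^ i) h"

lemma maxop_iter_0 [simp]: "maxop_iter h 0 = h"
  by (simp add: maxop_iter_def)

lemma maxop_iter_Suc: "maxop_iter h (Suc i) = maxop_real (maxop_iter h i)"
  by (simp add: maxop_iter_def)

definition rdf :: "(nat \<Rightarrow> real) \<Rightarrow> nat \<Rightarrow> real" where
  "rdf h j = (\<Sum>i. maxop_iter h i j / (2 * K) ^ i)"

lemma maxop_iter_nonneg: "(\<And>j. j \<ge> 1 \<Longrightarrow> h j \<ge> 0) \<Longrightarrow> j \<ge> 1 \<Longrightarrow> maxop_iter h i j \<ge> 0"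
  by (cases i) (auto simp: maxop_iter_Suc maxop_real_nonneg)

context
  fixes h :: "nat \<Rightarrow> real" and s :: real
  assumes nonneg: "\<And>j. j \<ge> 1 \<Longrightarrow> h j \<ge> 0"
    and wsum_le: "wsum q \<sigma> h \<le> ennreal s" and "s \<ge> 0"
begin

lemma wsum_maxop_iter_le: "wsum q \<sigma> (maxop_iter h i) \<le> ennreal ((K powr q) ^ i * s)"
proof (induction i)
  case 0 then show ?case using wsum_le by simp
next
  case (Suc i)
  have "wsum q \<sigma> (maxop_iter h (Suc i)) \<le> ennreal (K powr q * ((K powr q) ^ i * s))"
    unfolding maxop_iter_Suc
    using Suc.IH \<open>s \<ge> 0\<close> by (intro wsum_maxop_real_le) (auto intro: maxop_iter_nonneg nonneg)
  then show ?case by (simp add: mult.assoc)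
qed

lemma maxop_iter_le: "j \<ge> 1 \<Longrightarrow> maxop_iter h i j \<le> K ^ i * (s / \<sigma> j) powr (1/q)"
proof -
  assume j: "j \<ge> 1"
  have Tj: "maxop_iter h i j \<ge> 0" using maxop_iter_nonneg nonneg j by auto
  have sj: "\<sigma> j > 0" using weight_pos j by auto
  have "\<sigma> j * maxop_iter h i j powr q \<le> (K powr q) ^ i * s"
    using \<open>s \<ge> 0\<close> by (intro term_le_wsum[OF wsum_maxop_iter_le _ j]) simp
  then have "maxop_iter h i j powr q \<le> (K ^ i) powr q * (s / \<sigma> j)"
    using sj K_nonneg by (simp add: power_powr field_simps)
  then have "(maxop_iter h i j powr q) powr (1/q) \<le> ((K ^ i) powr q * (s / \<sigma> j)) powr (1/q)"
    using exponent_gt_1 by (intro powr_mono2) auto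
  also have "\<dots> = ((K ^ i) powr q) powr (1/q) * (s / \<sigma> j) powr (1/q)"
    using sj \<open>s \<ge> 0\<close> by (intro powr_mult)
  also have "\<dots> = K ^ i * (s / \<sigma> j) powr (1/q)"
    using K_nonneg exponent_gt_1 by (simp add: powr_powr)
  finally show ?thesis using Tj exponent_gt_1 by (simp add: powr_powr)
qed

lemma avg_maxop_iter_le:
  assumes "1 \<le> j" "j \<le> n"
  shows "(\<Sum>m=1..n. maxop_iter h i m) / n \<le> maxop_iter h (Suc i) j"
proof -
  have T0: "\<And>m. m \<ge> 1 \<Longrightarrow> maxop_iter h i m \<ge> 0" using maxop_iter_nonneg nonneg by auto
  have "ennreal ((\<Sum>m=1..n. maxop_iter h i m) / n) \<le> maxop (maxop_iter h i) j"
    unfolding maxop_def using assms T0 by (intro SUP_upper2[of n]) auto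
  also have "\<dots> = ennreal (maxop_iter h (Suc i) j)"
    unfolding maxop_iter_Suc
    by (rule maxop_eq_maxop_real[OF T0 wsum_maxop_iter_le]) (use assms \<open>s \<ge> 0\<close> in auto)
  finally show ?thesis using maxop_real_nonneg by (simp add: maxop_iter_Suc)
qed

lemma K_pos:
  assumes "h i0 > 0" "i0 \<ge> 1"
  shows "K > 0"
proof (rule ccontr)
  assume "\<not> K > 0"
  then have "K = 0" using K_nonneg by simp
  then have "wsum q \<sigma> (maxop_real h) \<le> ennreal 0"
    using wsum_maxop_real_le[OF nonneg wsum_le \<open>s \<ge> 0\<close>] exponent_gt_1 by simp
  then have "\<sigma> 1 * maxop_real h 1 powr q \<le> 0" by (rule term_le_wsum) auto
  then have "maxop_real h 1 = 0" using weight_pos[of 1] by (simp add: mult_le_0_iff)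
  then have "maxop h 1 = 0"
    using maxop_eq_maxop_real[OF nonneg wsum_le \<open>s \<ge> 0\<close>, of 1] by simp
  moreover have "ennreal ((\<Sum>j=1..i0. \<bar>h j\<bar>) / i0) \<le> maxop h 1"
    unfolding maxop_def by (rule SUP_upper) (use assms in auto)
  moreover have "\<bar>h i0\<bar> \<le> (\<Sum>j=1..i0. \<bar>h j\<bar>)" using assms by (intro member_le_sum) auto
  ultimately show False using assms by simp
qed

context
  assumes K_pos: "K > 0"
begin

lemma rdf_summable: "j \<ge> 1 \<Longrightarrow> summable (\<lambda>i. maxop_iter h i j / (2 * K) ^ i)"
proof (rule summable_comparison_test')
  assume j: "j \<ge> 1"
  define C where "C = (s / \<sigma> j) powr (1/q)"
  show "summable (\<lambda>i. C * (1/2) ^ i)" by (intro summable_mult summable_geometric) simp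
  fix i :: nat
  have "norm (maxop_iter h i j / (2 * K) ^ i) = maxop_iter h i j / (2 * K) ^ i"
    using maxop_iter_nonneg[OF nonneg j] K_pos by simp
  also have "\<dots> \<le> K ^ i * C / (2 * K) ^ i"
    using maxop_iter_le[OF j, of i] K_pos by (intro divide_right_mono) (auto simp: C_def)
  also have "\<dots> = C * (1/2) ^ i"
    using K_pos by (simp add: power_mult_distrib power_divide field_simps)
  finally show "norm (maxop_iter h i j / (2 * K) ^ i) \<le> C * (1/2) ^ i" .
qed

lemma rdf_nonneg: "j \<ge> 1 \<Longrightarrow> rdf h j \<ge> 0"
  unfolding rdf_def
  by (rule suminf_nonneg[OF rdf_summable]) (use maxop_iter_nonneg[OF nonneg] K_pos in auto)

lemma le_rdf: "j \<ge> 1 \<Longrightarrow> h j \<le> rdf h j"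
  using sum_le_suminf[OF rdf_summable, of j "{0}"] maxop_iter_nonneg[OF nonneg] K_pos
  by (simp add: rdf_def)

lemma rdf_avg_le:
  assumes j: "1 \<le> j" "j \<le> n"
  shows "(\<Sum>m=1..n. rdf h m) / n \<le> 2 * K * rdf h j"
proof -
  have sm: "\<And>m. m \<in> {1..n} \<Longrightarrow> summable (\<lambda>i. maxop_iter h i m / (2 * K) ^ i)"
    using rdf_summable by auto
  have sL: "summable (\<lambda>i. (\<Sum>m=1..n. maxop_iter h i m) / (2 * K) ^ i)"
    using summable_sum[of "{1..n}" "\<lambda>m i. maxop_iter h i m / (2 * K) ^ i", OF sm]
    by (simp add: sum_divide_distrib)
  have sR: "summable (\<lambda>i. maxop_iter h (Suc i) j / (2 * K) ^ Suc i)"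
    using rdf_summable[OF j(1)] by (subst summable_Suc_iff)
  have "(\<Sum>m=1..n. rdf h m) = (\<Sum>i. \<Sum>m=1..n. maxop_iter h i m / (2 * K) ^ i)"
    unfolding rdf_def by (rule suminf_sum[symmetric]) (use sm in auto)
  also have "\<dots> = (\<Sum>i. (\<Sum>m=1..n. maxop_iter h i m) / (2 * K) ^ i)"
    by (simp add: sum_divide_distrib)
  finally have "(\<Sum>m=1..n. rdf h m) / n = (\<Sum>i. (\<Sum>m=1..n. maxop_iter h i m) / n / (2 * K) ^ i)"
    using suminf_divide[OF sL, of n] by (simp add: field_simps)
  also have "\<dots> \<le> (\<Sum>i. 2 * K * (maxop_iter h (Suc i) j / (2 * K) ^ Suc i))"
  proof (rule suminf_le[OF _ _ summable_mult[OF sR]])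
    fix i
    have "(\<Sum>m=1..n. maxop_iter h i m) / n / (2 * K) ^ i \<le> maxop_iter h (Suc i) j / (2 * K) ^ i"
      using avg_maxop_iter_le[OF j, of i] K_pos by (intro divide_right_mono) auto
    then show "(\<Sum>m=1..n. maxop_iter h i m) / n / (2 * K) ^ i
        \<le> 2 * K * (maxop_iter h (Suc i) j / (2 * K) ^ Suc i)"
      using K_pos by simp
  qed (use summable_divide[OF sL, of n] in \<open>simp add: field_simps\<close>)
  also have "\<dots> = 2 * K * (rdf h j - h j)"
    unfolding suminf_mult[OF sR] rdf_def suminf_split_head[OF rdf_summable[OF j(1)]] by simp
  also have "\<dots> \<le> 2 * K * rdf h j"
    using nonneg j K_pos by (intro mult_left_mono) auto
  finally show ?thesis .
qed

(* Expanding one factor of rdf h j powr q = rdf h j powr (q - 1) * rdf h j into its series and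
   applying Hoelder to each term bounds the partial sum P by 2 s^(1/q) P^(1 - 1/q). *)
lemma sum_rdf_powr_le: "(\<Sum>j=1..J. \<sigma> j * rdf h j powr q) \<le> 2 powr q * s"
proof -
  define P where "P = (\<Sum>j=1..J. \<sigma> j * rdf h j powr q)"
  define c where "c = s powr (1/q) * P powr (1 - 1/q)"
  have P0: "P \<ge> 0"
    unfolding P_def using rdf_nonneg weight_pos by (intro sum_nonneg mult_nonneg_nonneg) (auto simp: less_imp_le)
  have sm: "\<And>j. j \<in> {1..J} \<Longrightarrow> summable (\<lambda>i. \<sigma> j * rdf h j powr (q - 1) * (maxop_iter h i j / (2 * K) ^ i))"
    by (intro summable_mult rdf_summable) auto
  have "P = (\<Sum>j=1..J. \<sigma> j * rdf h j powr (q - 1) * rdf h j)"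
    unfolding P_def using powr_mult_base[OF rdf_nonneg, of _ "q - 1"]
    by (intro sum.cong) (auto simp: mult_ac)
  also have "\<dots> = (\<Sum>j=1..J. \<Sum>i. \<sigma> j * rdf h j powr (q - 1) * (maxop_iter h i j / (2 * K) ^ i))"
  proof (intro sum.cong refl)
    fix j assume "j \<in> {1..J}"
    then show "\<sigma> j * rdf h j powr (q - 1) * rdf h j
        = (\<Sum>i. \<sigma> j * rdf h j powr (q - 1) * (maxop_iter h i j / (2 * K) ^ i))"
      using suminf_mult[OF rdf_summable, of j "\<sigma> j * rdf h j powr (q - 1)"] by (simp only: rdf_def) simp
  qed
  also have "\<dots> = (\<Sum>i. \<Sum>j=1..J. \<sigma> j * rdf h j powr (q - 1) * (maxop_iter h i j / (2 * K) ^ i))"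
    by (rule suminf_sum[OF sm, symmetric])
  also have "\<dots> \<le> (\<Sum>i. c * (1/2) ^ i)"
  proof (rule suminf_le[OF _ summable_sum[OF sm]])
    fix i
    have T0: "\<And>m. m \<ge> 1 \<Longrightarrow> maxop_iter h i m \<ge> 0" using maxop_iter_nonneg[OF nonneg] by auto
    have "(\<Sum>j=1..J. \<sigma> j * maxop_iter h i j powr q) \<le> (K powr q) ^ i * s"
      using \<open>s \<ge> 0\<close> weight_pos by (intro sum_le_wsum[OF wsum_maxop_iter_le]) (auto intro: less_imp_le)
    then have "(\<Sum>j=1..J. \<sigma> j * maxop_iter h i j powr q) powr (1/q) \<le> ((K powr q) ^ i * s) powr (1/q)"
      using exponent_gt_1 weight_pos by (intro powr_mono2 sum_nonneg mult_nonneg_nonneg) (auto simp: less_imp_le)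
    also have "\<dots> = K ^ i * s powr (1/q)"
      using K_pos exponent_gt_1 \<open>s \<ge> 0\<close> by (simp add: powr_mult power_powr[symmetric] powr_powr)
    finally have norm_i: "(\<Sum>j=1..J. \<sigma> j * maxop_iter h i j powr q) powr (1/q) \<le> K ^ i * s powr (1/q)" .
    have "(\<Sum>j=1..J. \<sigma> j * rdf h j powr (q - 1) * (maxop_iter h i j / (2 * K) ^ i))
        = (\<Sum>j=1..J. \<sigma> j * maxop_iter h i j * rdf h j powr (q - 1)) / (2 * K) ^ i"
      by (simp add: sum_divide_distrib mult_ac)
    also have "\<dots> \<le> ((\<Sum>j=1..J. \<sigma> j * maxop_iter h i j powr q) powr (1/q) * P powr (1 - 1/q)) / (2 * K) ^ i"
      unfolding P_def using K_pos
      by (intro divide_right_mono sum_weighted_holder) (auto intro: weight_pos T0 rdf_nonneg exponent_gt_1)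
    also have "\<dots> \<le> (K ^ i * s powr (1/q) * P powr (1 - 1/q)) / (2 * K) ^ i"
      using K_pos norm_i by (intro divide_right_mono mult_right_mono) auto
    also have "\<dots> = c * (1/2) ^ i"
      using K_pos by (simp add: c_def power_mult_distrib power_divide field_simps)
    finally show "(\<Sum>j=1..J. \<sigma> j * rdf h j powr (q - 1) * (maxop_iter h i j / (2 * K) ^ i)) \<le> c * (1/2) ^ i" .
  qed (auto intro!: summable_mult summable_geometric)
  also have "\<dots> = 2 * s powr (1/q) * P powr (1 - 1/q)"
    by (simp add: suminf_mult[OF summable_geometric[of "1/2::real"]] suminf_geometric c_def)
  finally have "P \<le> 2 * s powr (1/q) * P powr (1 - 1/q)" .
  then show ?thesis
    unfolding P_def[symmetric] by (intro powr_le_self_absorb) (use P0 \<open>s \<ge> 0\<close> exponent_gt_1 in auto)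
qed

lemma rdf_pos:
  assumes "h i0 > 0" "i0 \<ge> 1" "j \<ge> 1"
  shows "rdf h j > 0"
proof -
  define n where "n = max j i0"
  have "h i0 \<le> (\<Sum>m=1..n. h m)" using assms nonneg by (intro member_le_sum) (auto simp: n_def)
  also have "\<dots> \<le> (\<Sum>m=1..n. rdf h m)" using le_rdf by (intro sum_mono) auto
  finally have "(\<Sum>m=1..n. rdf h m) / n > 0" using assms by (simp add: n_def)
  also have "(\<Sum>m=1..n. rdf h m) / n \<le> 2 * K * rdf h j"
    using rdf_avg_le[of j n] assms by (simp add: n_def)
  finally show ?thesis using K_pos by (simp add: zero_less_mult_iff)
qed

end

end

end

section \<open>Muckenhoupt weights\<close>

lemma Aq_avg_le_Aq_const:
  assumes "in_Aq q w" "n \<ge> 1"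
  shows "(1 / real n * (\<Sum>k=1..n. w k)) * (1 / real n * (\<Sum>k=1..n. w k powr (- 1 / (q - 1)))) powr (q - 1)
    \<le> Aq_const q w"
  unfolding Aq_const_def
proof (rule le_enn2real_if_ennreal_le)
  show "Aq_char q w \<noteq> top" using assms(1) by (auto simp: in_Aq_def)
  show "ennreal ((1 / real n * (\<Sum>k=1..n. w k)) * (1 / real n * (\<Sum>k=1..n. w k powr (- 1 / (q - 1)))) powr (q - 1))
      \<le> Aq_char q w"
    unfolding Aq_char_def by (rule SUP_upper) (use assms(2) in auto)
qed

lemma Aq_const_ge_1:
  assumes "in_Aq q w" "q > 1"
  shows "Aq_const q w \<ge> 1"
proof -
  have "w 1 > 0" using assms(1) by (simp add: in_Aq_def is_weight_def)
  moreover have "(w 1 powr (- 1 / (q - 1))) powr (q - 1) = w 1 powr (- 1)"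
    using assms(2) by (simp add: powr_powr)
  ultimately have "w 1 * (w 1 powr (- 1 / (q - 1))) powr (q - 1) = 1"
    by (simp add: powr_minus)
  then show ?thesis using Aq_avg_le_Aq_const[OF assms(1), of 1] by simp
qed

lemma in_Aq_Aq_const_leI:
  assumes "is_weight w" "X \<ge> 0"
    and avg: "\<And>n. n \<ge> 1 \<Longrightarrow>
      (1 / real n * (\<Sum>k=1..n. w k)) * (1 / real n * (\<Sum>k=1..n. w k powr (- 1 / (q - 1)))) powr (q - 1) \<le> X"
  shows "in_Aq q w" and "Aq_const q w \<le> X"
proof -
  have "Aq_char q w \<le> ennreal X"
    unfolding Aq_char_def by (rule SUP_least) (use avg in \<open>auto intro: ennreal_leI\<close>)
  then show "in_Aq q w" and "Aq_const q w \<le> X"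
    using assms(1,2) by (auto simp: in_Aq_def Aq_const_def top.not_eq_extremum le_less_trans enn2real_leI)
qed

lemma dual_weight_avg_le:
  fixes w :: "nat \<Rightarrow> real" and p :: real
  assumes "in_Aq p w" "p > 1" "n \<ge> 1"
  shows "((\<Sum>j=1..n. w j powr (1 - p/(p-1))) / n) * ((\<Sum>j=1..n. w j) / n) powr (p/(p-1) - 1)
    \<le> Aq_const p w powr (p/(p-1) - 1)"
proof -
  define SW where "SW = (\<Sum>k=1..n. w k) / n"
  define SS where "SS = (\<Sum>k=1..n. w k powr (1 - p/(p-1))) / n"
  have "\<And>k. k \<ge> 1 \<Longrightarrow> w k > 0" using assms(1) by (simp add: in_Aq_def is_weight_def)
  then have "SW \<ge> 0" "SS \<ge> 0"
    unfolding SW_def SS_def by (auto intro!: divide_nonneg_nonneg sum_nonneg simp: less_imp_le)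
  have "- 1 / (p - 1) = 1 - p / (p - 1)" using assms(2) by (simp add: field_simps)
  then have "SW * SS powr (p - 1) \<le> Aq_const p w"
    using Aq_avg_le_Aq_const[OF assms(1,3)] unfolding SW_def SS_def by simp
  then have "(SW * SS powr (p - 1)) powr (p/(p-1) - 1) \<le> Aq_const p w powr (p/(p-1) - 1)"
    using \<open>SW \<ge> 0\<close> \<open>SS \<ge> 0\<close> assms(2) by (intro powr_mono2) auto
  moreover have "(SW * SS powr (p - 1)) powr (p/(p-1) - 1) = SS * SW powr (p/(p-1) - 1)"
  proof -
    have "(p - 1) * (p/(p-1) - 1) = 1" using assms(2) by (simp add: field_simps)
    then show ?thesis using \<open>SW \<ge> 0\<close> \<open>SS \<ge> 0\<close> by (simp add: powr_mult powr_powr mult.commute)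
  qed
  ultimately show ?thesis
    unfolding SW_def[symmetric] SS_def[symmetric] by simp
qed

lemma bounded_maxop_dual_weight:
  assumes "in_Aq p w" "p > 1"
  shows "bounded_maxop (p/(p-1)) (\<lambda>k. w k powr (1 - p/(p-1)))"
proof
  show "p/(p-1) > 1" using assms(2) by simp
  have w: "\<And>j. j \<ge> 1 \<Longrightarrow> w j > 0" using assms(1) by (simp add: in_Aq_def is_weight_def)
  then show "\<And>j. j \<ge> 1 \<Longrightarrow> w j powr (1 - p/(p-1)) > 0"
    by (metis order_less_irrefl powr_gt_zero)
  then show "maxop_norm (p/(p-1)) (\<lambda>k. w k powr (1 - p/(p-1))) \<noteq> top"
    using maxop_norm_le_Aq[OF \<open>p/(p-1) > 1\<close> _ w dual_weight_avg_le[OF assms]]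
    by (auto simp: top_unique)
qed

lemma dual_avg_factored_weight_le:
  fixes w H :: "nat \<Rightarrow> real"
  assumes "n \<ge> 1" "r > 0" "a \<ge> 0" "m > 0"
    and w: "\<And>k. k \<in> {1..n} \<Longrightarrow> w k > 0" and H: "\<And>k. k \<in> {1..n} \<Longrightarrow> H k \<ge> m"
  shows "(1 / n * (\<Sum>k=1..n. (w k powr b * H k powr a) powr (- 1 / r))) powr r
    \<le> ((\<Sum>k=1..n. w k powr (- b / r)) / n) powr r * m powr (- a)"
proof -
  have "(w k powr b * H k powr a) powr (- 1 / r) \<le> w k powr (- b / r) * m powr (- a / r)"
    if k: "k \<in> {1..n}" for k
  proof -
    have "H k > 0" using H[OF k] \<open>m > 0\<close> by simp
    have "m powr (a / r) \<le> H k powr (a / r)"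
      using H[OF k] assms by (intro powr_mono2) auto
    then have "H k powr (- a / r) \<le> m powr (- a / r)"
      using \<open>m > 0\<close> \<open>H k > 0\<close> by (simp add: powr_minus divide_simps)
    then show ?thesis
      using w[OF k] \<open>H k > 0\<close> by (simp add: powr_mult powr_powr mult_left_mono)
  qed
  then have "(\<Sum>k=1..n. (w k powr b * H k powr a) powr (- 1 / r))
      \<le> (\<Sum>k=1..n. w k powr (- b / r)) * m powr (- a / r)"
    unfolding sum_distrib_right by (rule sum_mono)
  then have "1 / n * (\<Sum>k=1..n. (w k powr b * H k powr a) powr (- 1 / r))
      \<le> (\<Sum>k=1..n. w k powr (- b / r)) / n * m powr (- a / r)"
    using assms by (simp add: divide_right_mono)
  then have "(1 / n * (\<Sum>k=1..n. (w k powr b * H k powr a) powr (- 1 / r))) powr r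
      \<le> ((\<Sum>k=1..n. w k powr (- b / r)) / n * m powr (- a / r)) powr r"
    using assms by (intro powr_mono2) (auto intro!: sum_nonneg divide_nonneg_nonneg)
  also have "\<dots> = ((\<Sum>k=1..n. w k powr (- b / r)) / n) powr r * m powr (- a)"
    using assms by (subst powr_mult) (auto intro!: sum_nonneg simp: powr_powr)
  finally show ?thesis .
qed

lemma Aq_avg_factored_weight_le:
  fixes w H :: "nat \<Rightarrow> real" and p p0 C W :: real
  assumes p0: "1 < p0" "p0 < p" "n \<ge> 1"
    and w: "\<And>j. j \<ge> 1 \<Longrightarrow> w j > 0" and H: "\<And>j. j \<ge> 1 \<Longrightarrow> H j > 0" and "C > 0"
    and A1: "\<And>j. 1 \<le> j \<Longrightarrow> j \<le> n \<Longrightarrow> (\<Sum>m=1..n. H m) / n \<le> C * H j"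
    and Ap: "(1 / real n * (\<Sum>k=1..n. w k)) * (1 / real n * (\<Sum>k=1..n. w k powr (- 1 / (p - 1)))) powr (p - 1) \<le> W"
  shows "(1 / real n * (\<Sum>k=1..n. w k powr ((p0 - 1) / (p - 1)) * H k powr ((p - p0) / (p - 1)))) *
         (1 / real n * (\<Sum>k=1..n. (w k powr ((p0 - 1) / (p - 1)) * H k powr ((p - p0) / (p - 1))) powr (- 1 / (p0 - 1)))) powr (p0 - 1)
         \<le> C powr ((p - p0) / (p - 1)) * W powr ((p0 - 1) / (p - 1))"
proof -
  define a where "a = (p - p0) / (p - 1)"
  define b where "b = (p0 - 1) / (p - 1)"
  have "b = 1 - a" "0 < a" "0 < b" "a < 1" using p0 by (auto simp: a_def b_def field_simps)
  define SW where "SW = (\<Sum>k=1..n. w k) / n"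
  define SS where "SS = (\<Sum>k=1..n. w k powr (- 1 / (p - 1))) / n"
  define SH where "SH = (\<Sum>k=1..n. H k) / n"
  have "SW > 0" unfolding SW_def using w p0 by (intro divide_pos_pos sum_pos) auto
  have "SS > 0" unfolding SS_def using w p0 by (intro divide_pos_pos sum_pos) (auto simp: less_imp_neq[symmetric])
  have "SH > 0" unfolding SH_def using H p0 by (intro divide_pos_pos sum_pos) auto
  have "- b / (p0 - 1) = - 1 / (p - 1)" using p0 by (simp add: b_def)
  have "(1 / real n * (\<Sum>k=1..n. w k powr b * H k powr a)) *
        (1 / real n * (\<Sum>k=1..n. (w k powr b * H k powr a) powr (- 1 / (p0 - 1)))) powr (p0 - 1)
      \<le> (SW powr b * SH powr a) * (SS powr (p0 - 1) * (SH / C) powr (- a))"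
  proof (rule mult_mono)
    show "1 / real n * (\<Sum>k=1..n. w k powr b * H k powr a) \<le> SW powr b * SH powr a"
      using avg_powr_holder[of n b w H] \<open>b = 1 - a\<close> \<open>0 < a\<close> \<open>a < 1\<close> w H p0
      by (simp add: SW_def SH_def)
    show "(1 / real n * (\<Sum>k=1..n. (w k powr b * H k powr a) powr (- 1 / (p0 - 1)))) powr (p0 - 1)
        \<le> SS powr (p0 - 1) * (SH / C) powr (- a)"
    proof -
      have "SH / C \<le> H k" if "k \<in> {1..n}" for k
        using A1[of k] that \<open>C > 0\<close> by (simp add: SH_def pos_divide_le_eq mult_ac)
      from dual_avg_factored_weight_le[of n "p0 - 1" a "SH / C" w H b, OF _ _ _ _ w this]
      show ?thesis
        using p0 \<open>C > 0\<close> \<open>SH > 0\<close> \<open>0 < a\<close>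
        unfolding \<open>- b / (p0 - 1) = - 1 / (p - 1)\<close> SS_def by simp
    qed
  qed auto
  also have "\<dots> = C powr a * (SW * SS powr (p - 1)) powr b"
  proof -
    have "SH powr a * (SH / C) powr (- a) = C powr a"
      using \<open>SH > 0\<close> \<open>C > 0\<close> by (simp add: powr_minus powr_divide field_simps)
    moreover have "(SW * SS powr (p - 1)) powr b = SW powr b * SS powr (p0 - 1)"
      using \<open>SW > 0\<close> \<open>SS > 0\<close> p0 by (simp add: powr_mult powr_powr b_def)
    ultimately show ?thesis by (simp add: mult_ac)
  qed
  also have "\<dots> \<le> C powr a * W powr b"
  proof -
    have "SW * SS powr (p - 1) \<le> W" using Ap by (simp add: SW_def SS_def)
    then show ?thesis
      using \<open>SW > 0\<close> \<open>SS > 0\<close> \<open>0 < b\<close> by (intro mult_left_mono powr_mono2) auto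
  qed
  finally show ?thesis by (simp add: a_def b_def)
qed

section \<open>Extrapolation\<close>

lemma wsum_dual_exponent:
  assumes "p > 1" "\<And>k. k \<ge> 1 \<Longrightarrow> w k > 0" "\<And>k. k \<ge> 1 \<Longrightarrow> f k \<ge> 0"
  shows "wsum (p/(p-1)) (\<lambda>k. w k powr (1 - p/(p-1))) (\<lambda>k. f k powr (p - 1) * w k) = wsum p w f"
  unfolding wsum_def
proof (rule suminf_cong)
  fix k
  define j where "j = Suc k"
  have "w j > 0" "f j \<ge> 0" using assms(2,3) by (simp_all add: j_def)
  have "w j powr (1 - p/(p-1)) * (f j powr (p - 1) * w j) powr (p/(p-1))
      = (w j powr (1 - p/(p-1)) * w j powr (p/(p-1))) * (f j powr (p - 1)) powr (p/(p-1))"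
    using \<open>w j > 0\<close> by (simp add: powr_mult)
  also have "\<dots> = w j * f j powr p"
    using \<open>w j > 0\<close> assms(1) by (simp add: powr_add[symmetric] powr_powr)
  finally show "ennreal (w j powr (1 - p/(p-1)) * (f j powr (p - 1) * w j) powr (p/(p-1)))
      = ennreal (w j * f j powr p)" by simp
qed

lemma wsum_le_factored_weight:
  assumes "1 < p0" "p0 < p"
    and w: "\<And>k. k \<ge> 1 \<Longrightarrow> w k > 0" and f: "\<And>k. k \<ge> 1 \<Longrightarrow> f k \<ge> 0"
    and H: "\<And>k. k \<ge> 1 \<Longrightarrow> f k powr (p - 1) * w k \<le> H k"
  shows "wsum p w f \<le> wsum p0 (\<lambda>k. w k powr ((p0 - 1) / (p - 1)) * H k powr ((p - p0) / (p - 1))) f"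
  unfolding wsum_def
proof (intro suminf_le ennreal_leI)
  define a where "a = (p - p0) / (p - 1)"
  define b where "b = (p0 - 1) / (p - 1)"
  fix k
  define j where "j = Suc k"
  have "j \<ge> 1" by (simp add: j_def)
  show "w j * f j powr p \<le> w j powr b * H j powr a * f j powr p0"
  proof (cases "f j = 0")
    case True then show ?thesis using assms(1) by simp
  next
    case False
    with f[OF \<open>j \<ge> 1\<close>] have "f j > 0" by simp
    have "w j * f j powr p = (w j powr a * w j powr b) * (f j powr (p - p0) * f j powr p0)"
      using w[OF \<open>j \<ge> 1\<close>] \<open>f j > 0\<close> assms(1,2)
      by (simp add: powr_add[symmetric] a_def b_def add_divide_distrib[symmetric])
    also have "\<dots> = w j powr b * (f j powr (p - 1) * w j) powr a * f j powr p0"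
      using w[OF \<open>j \<ge> 1\<close>] \<open>f j > 0\<close> assms(1,2) by (simp add: powr_mult powr_powr a_def mult_ac)
    also have "\<dots> \<le> w j powr b * H j powr a * f j powr p0"
      using H[OF \<open>j \<ge> 1\<close>] f[OF \<open>j \<ge> 1\<close>] w[OF \<open>j \<ge> 1\<close>] assms(1,2)
      by (intro mult_right_mono mult_left_mono powr_mono2) (auto simp: a_def)
    finally show ?thesis .
  qed
qed auto

lemma wsum_factored_weight_le:
  assumes "1 < p0" "p0 < p"
    and w: "\<And>k. k \<ge> 1 \<Longrightarrow> w k > 0" and H: "\<And>k. k \<ge> 1 \<Longrightarrow> H k > 0" and g: "\<And>k. k \<ge> 1 \<Longrightarrow> g k \<ge> 0"
    and G: "wsum p w g \<le> ennreal G" "G \<ge> 0"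
    and B: "\<And>N. (\<Sum>k=1..N. w k powr (1 - p/(p-1)) * H k powr (p/(p-1))) \<le> B"
  shows "wsum p0 (\<lambda>k. w k powr ((p0 - 1) / (p - 1)) * H k powr ((p - p0) / (p - 1))) g
    \<le> ennreal (G powr (p0/p) * B powr (1 - p0/p))"
proof (rule wsum_le_ennreal)
  define \<theta> where "\<theta> = p0 / p"
  have "0 < \<theta>" "\<theta> < 1" using assms(1,2) by (auto simp: \<theta>_def)
  have split: "w k powr ((p0 - 1) / (p - 1)) * H k powr ((p - p0) / (p - 1)) * g k powr p0
      = (w k * g k powr p) powr \<theta> * (w k powr (1 - p/(p-1)) * H k powr (p/(p-1))) powr (1 - \<theta>)"
    if "k \<ge> 1" for k
  proof -
    have "(w k * g k powr p) powr \<theta> * (w k powr (1 - p/(p-1)) * H k powr (p/(p-1))) powr (1 - \<theta>)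
        = (w k powr \<theta> * w k powr ((1 - p/(p-1)) * (1 - \<theta>))) * H k powr (p/(p-1) * (1 - \<theta>)) * g k powr (p * \<theta>)"
      using w[OF that] H[OF that] g[OF that] by (simp add: powr_mult powr_powr mult_ac)
    also have "w k powr \<theta> * w k powr ((1 - p/(p-1)) * (1 - \<theta>)) = w k powr ((p0 - 1) / (p - 1))"
    proof -
      have "\<theta> + (1 - p/(p-1)) * (1 - \<theta>) = (p0 - 1) / (p - 1)"
        using assms(1,2) by (simp add: \<theta>_def field_simps)
      then show ?thesis using w[OF that] by (simp add: powr_add[symmetric])
    qed
    also have "p/(p-1) * (1 - \<theta>) = (p - p0) / (p - 1)" using assms(1,2) by (simp add: \<theta>_def field_simps)
    also have "p * \<theta> = p0" using assms(1,2) by (simp add: \<theta>_def)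
    finally show ?thesis by simp
  qed
  fix N
  have "(\<Sum>k=1..N. w k powr ((p0 - 1) / (p - 1)) * H k powr ((p - p0) / (p - 1)) * g k powr p0)
      = (\<Sum>k=1..N. (w k * g k powr p) powr \<theta> * (w k powr (1 - p/(p-1)) * H k powr (p/(p-1))) powr (1 - \<theta>))"
    using split by (intro sum.cong) auto
  also have "\<dots> \<le> (\<Sum>k=1..N. w k * g k powr p) powr \<theta> * (\<Sum>k=1..N. w k powr (1 - p/(p-1)) * H k powr (p/(p-1))) powr (1 - \<theta>)"
    using w \<open>0 < \<theta>\<close> \<open>\<theta> < 1\<close> by (intro sum_powr_holder) (auto simp: less_imp_le)
  also have "\<dots> \<le> G powr \<theta> * B powr (1 - \<theta>)"
    using sum_le_wsum[OF G(1) _ G(2), of N] B[of N] w \<open>0 < \<theta>\<close> \<open>\<theta> < 1\<close>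
    by (intro mult_mono powr_mono2) (auto intro!: sum_nonneg simp: less_imp_le)
  finally show "(\<Sum>k=1..N. w k powr ((p0 - 1) / (p - 1)) * H k powr ((p - p0) / (p - 1)) * g k powr p0)
      \<le> G powr (p0/p) * B powr (1 - p0/p)" by (simp add: \<theta>_def)
qed (use w in simp)

(* The factor F powr ((1 - p0/p) / p0) is divided out here; this is where f \<in> l^p(w) is used. *)
lemma extrapolation_absorb:
  fixes F G c p0 p :: real
  assumes "1 < p0" "p0 < p" "F > 0" "G \<ge> 0" "c \<ge> 0"
    and bound: "F powr (1/p0) \<le> c * (G powr (p0/p) * (2 powr (p/(p-1)) * F) powr (1 - p0/p)) powr (1/p0)"
  shows "F powr (1/p) \<le> 2 powr ((p - p0) / ((p - 1) * p0)) * c * G powr (1/p)"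
proof -
  define d where "d = (1 - p0/p) / p0"
  have "(G powr (p0/p) * (2 powr (p/(p-1)) * F) powr (1 - p0/p)) powr (1/p0)
      = G powr (p0/p/p0) * 2 powr (p/(p-1) * (1 - p0/p) / p0) * F powr d"
    using assms(3,4) by (simp add: powr_mult powr_powr d_def)
  also have "p0/p/p0 = 1/p" using assms(1) by simp
  also have "p/(p-1) * (1 - p0/p) / p0 = (p - p0) / ((p - 1) * p0)"
    using assms(1,2) by (simp add: field_simps)
  finally have "F powr (1/p) * F powr d \<le> (2 powr ((p - p0) / ((p - 1) * p0)) * c * G powr (1/p)) * F powr d"
    using bound assms(1,2,3) by (simp add: powr_add[symmetric] d_def field_simps)
  then show ?thesis using assms(3) by simp
qed

lemma rubio_de_francia_weight:
  fixes p0 p :: real and w f :: "nat \<Rightarrow> real"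
  assumes "1 < p0" "p0 < p" "in_Aq p w"
    and f: "\<And>k. k \<ge> 1 \<Longrightarrow> f k \<ge> 0" and F: "wsum p w f = ennreal F" "F > 0"
  obtains H where "\<And>k. k \<ge> 1 \<Longrightarrow> H k > 0"
    and "\<And>k. k \<ge> 1 \<Longrightarrow> f k powr (p - 1) * w k \<le> H k"
    and "\<And>N. (\<Sum>k=1..N. w k powr (1 - p/(p-1)) * H k powr (p/(p-1))) \<le> 2 powr (p/(p-1)) * F"
    and "in_Aq p0 (\<lambda>k. w k powr ((p0 - 1) / (p - 1)) * H k powr ((p - p0) / (p - 1)))"
    and "Aq_const p0 (\<lambda>k. w k powr ((p0 - 1) / (p - 1)) * H k powr ((p - p0) / (p - 1)))
      \<le> (2 * enn2real (maxop_norm (p/(p-1)) (\<lambda>k. w k powr (1 - p/(p-1))))) powr ((p - p0) / (p - 1))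
         * Aq_const p w powr ((p0 - 1) / (p - 1))"
proof -
  have "p > 1" using assms(1,2) by simp
  have w: "\<And>k. k \<ge> 1 \<Longrightarrow> w k > 0" using assms(3) by (simp add: in_Aq_def is_weight_def)
  interpret bounded_maxop "p/(p-1)" "\<lambda>k. w k powr (1 - p/(p-1))"
    by (rule bounded_maxop_dual_weight[OF assms(3) \<open>p > 1\<close>])
  define h where "h = (\<lambda>k. f k powr (p - 1) * w k)"
  have h: "\<And>k. k \<ge> 1 \<Longrightarrow> h k \<ge> 0" using w by (simp add: h_def less_imp_le)
  obtain i0 where "i0 \<ge> 1" "f i0 > 0"
  proof (rule ccontr)
    assume "\<not> thesis"
    with that f have "\<forall>k\<ge>1. f k = 0" by (metis le_less)
    then have "wsum p w f = 0" by (simp add: wsum_def)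
    with F show False by simp
  qed
  have "h i0 > 0" using \<open>f i0 > 0\<close> \<open>i0 \<ge> 1\<close> w by (simp add: h_def)
  have "F \<ge> 0" using F(2) by simp
  have wsum_h: "wsum (p/(p-1)) (\<lambda>k. w k powr (1 - p/(p-1))) h \<le> ennreal F"
    using wsum_dual_exponent[OF \<open>p > 1\<close> w f] F by (simp add: h_def)
  have "K > 0" by (rule K_pos[OF h wsum_h \<open>F \<ge> 0\<close> \<open>h i0 > 0\<close> \<open>i0 \<ge> 1\<close>])
  note rdf_facts = rdf_pos[OF h wsum_h \<open>F \<ge> 0\<close> \<open>K > 0\<close> \<open>h i0 > 0\<close> \<open>i0 \<ge> 1\<close>]
    le_rdf[OF h wsum_h \<open>F \<ge> 0\<close> \<open>K > 0\<close>] sum_rdf_powr_le[OF h wsum_h \<open>F \<ge> 0\<close> \<open>K > 0\<close>]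
  define w0 where "w0 = (\<lambda>k. w k powr ((p0 - 1) / (p - 1)) * rdf h k powr ((p - p0) / (p - 1)))"
  have weight: "is_weight w0" unfolding is_weight_def w0_def
  proof (intro allI impI mult_pos_pos)
    fix k :: nat assume "k \<ge> 1"
    then have "w k > 0" "rdf h k > 0" using w rdf_facts(1) by auto
    then show "0 < w k powr ((p0 - 1) / (p - 1))" "0 < rdf h k powr ((p - p0) / (p - 1))" by auto
  qed
  have avg: "(1 / real n * (\<Sum>k=1..n. w0 k)) * (1 / real n * (\<Sum>k=1..n. w0 k powr (- 1 / (p0 - 1)))) powr (p0 - 1)
      \<le> (2 * K) powr ((p - p0) / (p - 1)) * Aq_const p w powr ((p0 - 1) / (p - 1))" if "n \<ge> 1" for n
    unfolding w0_def
    using Aq_avg_factored_weight_le[OF assms(1,2) that w rdf_facts(1)]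
      rdf_avg_le[OF h wsum_h \<open>F \<ge> 0\<close> \<open>K > 0\<close>] Aq_avg_le_Aq_const[OF assms(3) that] \<open>K > 0\<close>
    by simp
  have "in_Aq p0 w0" by (rule in_Aq_Aq_const_leI(1)[OF weight _ avg]) simp
  moreover have "Aq_const p0 w0 \<le> (2 * K) powr ((p - p0) / (p - 1)) * Aq_const p w powr ((p0 - 1) / (p - 1))"
    by (rule in_Aq_Aq_const_leI(2)[OF weight _ avg]) simp
  ultimately show ?thesis
    using rdf_facts that[of "rdf h"] by (simp add: w0_def h_def K_def)
qed

lemma extrapolation_via_weight:
  fixes p0 p c F :: real and w f g H :: "nat \<Rightarrow> real"
  defines "w0 \<equiv> \<lambda>k. w k powr ((p0 - 1) / (p - 1)) * H k powr ((p - p0) / (p - 1))"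
  assumes "1 < p0" "p0 < p" "c > 0"
    and w: "\<And>k. k \<ge> 1 \<Longrightarrow> w k > 0" and f: "\<And>k. k \<ge> 1 \<Longrightarrow> f k \<ge> 0" and g: "\<And>k. k \<ge> 1 \<Longrightarrow> g k \<ge> 0"
    and F: "wsum p w f = ennreal F" "F > 0"
    and H: "\<And>k. k \<ge> 1 \<Longrightarrow> H k > 0" "\<And>k. k \<ge> 1 \<Longrightarrow> f k powr (p - 1) * w k \<le> H k"
      "\<And>N. (\<Sum>k=1..N. w k powr (1 - p/(p-1)) * H k powr (p/(p-1))) \<le> 2 powr (p/(p-1)) * F"
    and hyp: "wnorm p0 w0 (\<lambda>k. ennreal (f k)) \<le> ennreal c * wnorm p0 w0 (\<lambda>k. ennreal (g k))"
  shows "wnorm p w (\<lambda>k. ennreal (f k))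
    \<le> ennreal (2 powr ((p - p0) / ((p - 1) * p0)) * c) * wnorm p w (\<lambda>k. ennreal (g k))"
proof (cases "wsum p w g")
  case (real G)
  have w0: "\<And>k. k \<ge> 1 \<Longrightarrow> w0 k \<ge> 0" by (simp add: w0_def)
  have wle: "\<And>k. k \<ge> 1 \<Longrightarrow> w k \<ge> 0" using w by (simp add: less_imp_le)
  define B where "B = G powr (p0/p) * (2 powr (p/(p-1)) * F) powr (1 - p0/p)"
  have "ennreal (F powr (1/p0)) = enn_rpow (wsum p w f) (1/p0)"
    using F by (simp add: enn_rpow_ennreal)
  also have "\<dots> \<le> enn_rpow (wsum p0 w0 f) (1/p0)"
    unfolding w0_def using assms(2,3) by (intro enn_rpow_mono wsum_le_factored_weight w f H(2)) auto
  also have "\<dots> = wnorm p0 w0 (\<lambda>k. ennreal (f k))"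
    by (rule wnorm_eq_wsum[OF w0 f, symmetric])
  also have "\<dots> \<le> ennreal c * enn_rpow (wsum p0 w0 g) (1/p0)"
    using hyp by (simp add: wnorm_eq_wsum[OF w0 g])
  also have "\<dots> \<le> ennreal c * ennreal (B powr (1/p0))"
  proof (intro mult_left_mono)
    have "wsum p0 w0 g \<le> ennreal B"
      unfolding w0_def B_def using real assms(2,3) w H(1) g H(3) by (intro wsum_factored_weight_le) auto
    then show "enn_rpow (wsum p0 w0 g) (1/p0) \<le> ennreal (B powr (1/p0))"
      using enn_rpow_mono[of _ "ennreal B" "1/p0"] assms(2) by (simp add: B_def enn_rpow_ennreal)
  qed simp
  finally have "F powr (1/p0) \<le> c * B powr (1/p0)"
    using \<open>c > 0\<close> by (simp add: ennreal_mult[symmetric])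
  then have "F powr (1/p) \<le> 2 powr ((p - p0) / ((p - 1) * p0)) * c * G powr (1/p)"
    unfolding B_def using assms(2,3) F real \<open>c > 0\<close> by (intro extrapolation_absorb) auto
  then show ?thesis
    using F real \<open>c > 0\<close> by (simp add: wnorm_eq_wsum[OF wle f] wnorm_eq_wsum[OF wle g] enn_rpow_ennreal ennreal_mult[symmetric])
next
  case top
  have "wnorm p w (\<lambda>k. ennreal (g k)) = top"
    using top w g by (simp add: wnorm_eq_wsum less_imp_le)
  then show ?thesis using \<open>c > 0\<close> by (simp add: ennreal_mult_top)
qed

theorem theorem3p2:
  fixes p0 p :: real and f g w :: "nat \<Rightarrow> real" and \<phi> :: "real \<Rightarrow> real"
  assumes "1 < p0" "p0 < p"
    and "\<forall>k\<ge>1. f k \<ge> 0" "\<forall>k\<ge>1. g k \<ge> 0"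
    and "\<forall>x\<ge>1. \<phi> x > 0" "mono_on {1..} \<phi>"
    and "\<forall>w0. in_Aq p0 w0 \<longrightarrow>
           wnorm p0 w0 (\<lambda>k. ennreal (f k)) \<le> ennreal (\<phi> (Aq_const p0 w0)) * wnorm p0 w0 (\<lambda>k. ennreal (g k))"
    and "in_Aq p w"
    and "wnorm p w (\<lambda>k. ennreal (f k)) < top"
  shows "wnorm p w (\<lambda>k. ennreal (f k)) \<le>
     ennreal (2 powr ((p - p0) / ((p - 1) * p0)) *
       \<phi> ((2 * enn2real (maxop_norm (p / (p - 1)) (\<lambda>k. w k powr (1 - p / (p - 1)))))
              powr ((p - p0) / (p - 1)) * Aq_const p w powr ((p0 - 1) / (p - 1))))
     * wnorm p w (\<lambda>k. ennreal (g k))"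
proof -
  have w: "\<And>k. k \<ge> 1 \<Longrightarrow> w k > 0" using assms(8) by (simp add: in_Aq_def is_weight_def)
  have f: "\<And>k. k \<ge> 1 \<Longrightarrow> f k \<ge> 0" and g: "\<And>k. k \<ge> 1 \<Longrightarrow> g k \<ge> 0" using assms(3,4) by auto
  have wnorm_f: "wnorm p w (\<lambda>k. ennreal (f k)) = enn_rpow (wsum p w f) (1/p)"
    using w f by (simp add: wnorm_eq_wsum less_imp_le)
  consider "wsum p w f = 0" | F where "wsum p w f = ennreal F" "F > 0"
    using assms(9) by (cases "wsum p w f") (auto simp: wnorm_f le_less)
  then show ?thesis
  proof cases
    case 1
    then show ?thesis by (simp add: wnorm_f)
  next
    case (2 F)
    obtain H where H: "\<And>k. k \<ge> 1 \<Longrightarrow> H k > 0" "\<And>k. k \<ge> 1 \<Longrightarrow> f k powr (p - 1) * w k \<le> H k"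
        "\<And>N. (\<Sum>k=1..N. w k powr (1 - p/(p-1)) * H k powr (p/(p-1))) \<le> 2 powr (p/(p-1)) * F"
      and weight_Ap0: "in_Aq p0 (\<lambda>k. w k powr ((p0 - 1) / (p - 1)) * H k powr ((p - p0) / (p - 1)))"
        "Aq_const p0 (\<lambda>k. w k powr ((p0 - 1) / (p - 1)) * H k powr ((p - p0) / (p - 1)))
          \<le> (2 * enn2real (maxop_norm (p/(p-1)) (\<lambda>k. w k powr (1 - p/(p-1))))) powr ((p - p0) / (p - 1))
             * Aq_const p w powr ((p0 - 1) / (p - 1))"
      using rubio_de_francia_weight[OF assms(1,2,8) f 2] by blast
    define w0 where "w0 = (\<lambda>k. w k powr ((p0 - 1) / (p - 1)) * H k powr ((p - p0) / (p - 1)))"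
    define X where "X = (2 * enn2real (maxop_norm (p/(p-1)) (\<lambda>k. w k powr (1 - p/(p-1))))) powr ((p - p0) / (p - 1))
      * Aq_const p w powr ((p0 - 1) / (p - 1))"
    have "in_Aq p0 w0" "Aq_const p0 w0 \<le> X" using weight_Ap0 by (simp_all add: w0_def X_def)
    have "1 \<le> Aq_const p0 w0" using Aq_const_ge_1[OF \<open>in_Aq p0 w0\<close>] assms(1) by simp
    then have "\<phi> (Aq_const p0 w0) \<le> \<phi> X"
      using \<open>Aq_const p0 w0 \<le> X\<close> by (intro mono_onD[OF assms(6)]) auto
    have "wnorm p0 w0 (\<lambda>k. ennreal (f k)) \<le> ennreal (\<phi> (Aq_const p0 w0)) * wnorm p0 w0 (\<lambda>k. ennreal (g k))"
      using assms(7) \<open>in_Aq p0 w0\<close> by blast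
    also have "\<dots> \<le> ennreal (\<phi> X) * wnorm p0 w0 (\<lambda>k. ennreal (g k))"
      using \<open>\<phi> (Aq_const p0 w0) \<le> \<phi> X\<close> by (intro mult_right_mono ennreal_leI) auto
    finally show ?thesis
      unfolding w0_def X_def[symmetric]
      using \<open>1 \<le> Aq_const p0 w0\<close> \<open>\<phi> (Aq_const p0 w0) \<le> \<phi> X\<close> assms(5)
      by (intro extrapolation_via_weight[OF assms(1,2) _ w f g 2 H]) force+
  qed
qed

end
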